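(* Let $\sigma:\mathbb{Z}'\to[0,1]$ with $\sum_{l\in\mathbb{Z}',\,l<0}\sigma(l)<\infty$, and let $s\in\mathbb{Z}'$ be such that $Q^0_\sigma(s):=\prod_{i=1}^{\infty}\bigl(1-\sigma(-i-s)\bigr)>0$. There exists $L_*=L_*(s)>0$ such that the discrete Riemann--Hilbert problem for $Y$ described in the context is solvable for $0\le L\le L_*$, and moreover \[ Y(z;L,s)=Y^{[0]}(z;s)+L Y^{[1]}(z;s)+L^2 Y^{[2]}(z;s)+L^3 Y^{[3]}(z;s)+\mathrm O(L^4),\qquad L\to 0, \] where $Y^{[i]}(z;s)$ are $2\times 2$ matrix-valued meromorphic functions of $z$ independent of $L$.
   Context: $\mathbb{Z}'=\mathbb{Z}+\tfrac12$, $\mathbb{Z}'_+=\mathbb{Z}'\cap(0,\infty)$; $\mathrm{J}_k$ is the Bessel function of the first kind. For $L\ge0$ let $K^{\mathsf{Be}}(a,a)=\sum_{l\in\mathbb{Z}'_+}\mathrm{J}_{a+l}(2L)^2$, $M_s(a,a)=\sigma(a-s-\tfrac12)K^{\mathsf{Be}}(a,a)$, $\mathbf f(a)=\sqrt{\sigma(a-s-\tfrac12)}(\mathrm{J}_{a-\frac12}(2L),L\mathrm{J}_{a+\frac12}(2L))^\top$, $\mathbf g(a)=\sqrt{\sigma(a-s-\tfrac12)}(L\mathrm{J}_{a+\frac12}(2L),-\mathrm{J}_{a-\frac12}(2L))^\top$, $W_Y(a)=\mathbf f(a)\mathbf g(a)^\top/(1-M_s(a,a))$. Discrete RH problem for $Y=Y(z;L,s)$: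 $Y$ is a $2\times2$ matrix-valued meromorphic function of $z$ with simple poles only at $\mathbb{Z}'$; for each $a\in\mathbb{Z}'$, $Y(z)\bigl(I-\frac{W_Y(a)}{z-a}\bigr)$ has a removable singularity at $z=a$; $\sup_{|z|=n}|Y(z)-I|\to0$ as $n\to+\infty$ through integers. *)

theory Defs
  imports "HOL-Complex_Analysis.Complex_Analysis"
begin

(* Half-integers Z' = Z + 1/2, as a set of reals and as a set of complex numbers.
   A half-integer a is written a = m + 1/2 with m :: int. *)
definition halfint :: "real set" where
  "halfint = {x. \<exists>m::int. x = of_int m + 1/2}"

definition halfintC :: "complex set" where
  "halfintC = complex_of_real ` halfint"

definition besselJ_nat :: "nat \<Rightarrow> real \<Rightarrow> real" where
  "besselJ_nat n x = (\<Sum>k. (-1)^k / (fact k * fact (k + n)) * (x/2)^(2*k + n))"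

definition besselJ :: "int \<Rightarrow> real \<Rightarrow> real" where
  "besselJ n x = (if 0 \<le> n then besselJ_nat (nat n) x
                  else (-1)^(nat (-n)) * besselJ_nat (nat (-n)) x)"

(* K^Be(a,a) = sum_{l in Z'_+} J_{a+l}(2L)^2 for a = m + 1/2;
   with l = k + 1/2 (k :: nat) the order a + l equals m + k + 1. *)
definition KBe :: "real \<Rightarrow> int \<Rightarrow> real" where
  "KBe L m = (\<Sum>k. (besselJ (m + int k + 1) (2*L))^2)"

definition Ms :: "(real \<Rightarrow> real) \<Rightarrow> real \<Rightarrow> real \<Rightarrow> int \<Rightarrow> real" where
  "Ms \<sigma> s L m = \<sigma> (of_int m + 1/2 - s - 1/2) * KBe L m"

(* f(a), g(a) for a = m + 1/2; note a - 1/2 = m, a + 1/2 = m + 1 *)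
definition fvec :: "(real \<Rightarrow> real) \<Rightarrow> real \<Rightarrow> real \<Rightarrow> int \<Rightarrow> real^2" where
  "fvec \<sigma> s L m = sqrt (\<sigma> (of_int m + 1/2 - s - 1/2)) *\<^sub>R
      vector [besselJ m (2*L), L * besselJ (m+1) (2*L)]"

definition gvec :: "(real \<Rightarrow> real) \<Rightarrow> real \<Rightarrow> real \<Rightarrow> int \<Rightarrow> real^2" where
  "gvec \<sigma> s L m = sqrt (\<sigma> (of_int m + 1/2 - s - 1/2)) *\<^sub>R
      vector [L * besselJ (m+1) (2*L), - besselJ m (2*L)]"

definition WY :: "(real \<Rightarrow> real) \<Rightarrow> real \<Rightarrow> real \<Rightarrow> int \<Rightarrow> complex^2^2" where
  "WY \<sigma> s L m = (\<chi> i j. complex_of_real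
      (fvec \<sigma> s L m $ i * gvec \<sigma> s L m $ j / (1 - Ms \<sigma> s L m)))"

definition RH_solution :: "(real \<Rightarrow> real) \<Rightarrow> real \<Rightarrow> real \<Rightarrow> (complex \<Rightarrow> complex^2^2) \<Rightarrow> bool" where
  "RH_solution \<sigma> s L Y \<longleftrightarrow>
     \<comment> \<open>meromorphic, holomorphic off Z'\<close>
     (\<forall>i j. (\<lambda>z. Y z $ i $ j) holomorphic_on (- halfintC)) \<and>
     \<comment> \<open>at most simple poles at the points of Z'\<close>
     (\<forall>m::int. \<forall>i j. \<exists>c. ((\<lambda>z. (z - complex_of_real (of_int m + 1/2)) * Y z $ i $ j) \<longlongrightarrow> c)
                         (at (complex_of_real (of_int m + 1/2)))) \<and>
     \<comment> \<open>jump condition: Y(z)(I - W_Y(a)/(z-a)) has a removable singularity at a\<close>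
     (\<forall>m::int. \<exists>R. ((\<lambda>z. Y z ** (mat 1 - (\<chi> i j. WY \<sigma> s L m $ i $ j / (z - complex_of_real (of_int m + 1/2)))))
                      \<longlongrightarrow> R) (at (complex_of_real (of_int m + 1/2)))) \<and>
     \<comment> \<open>normalisation: sup_{|z|=n} |Y(z) - I| -> 0 as n -> +oo through integers\<close>
     (\<forall>\<epsilon>>0. \<exists>N::nat. \<forall>n\<ge>N. \<forall>z. cmod z = real n \<longrightarrow> norm (Y z - mat 1) \<le> \<epsilon>)"

end

theory Submission
  imports Defs "HOL-Library.Landau_Symbols"
begin

text \<open>
  The problem is solved by the ansatz \<open>Y(z) = I + \<Sum>\<^sub>k x(k) g(a\<^sub>k)\<^sup>T / (z - a\<^sub>k)\<close> with rank-one
  residues. The jump condition at \<open>a\<^sub>m\<close> then becomes the linear system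
  \<open>x(m) = c\<^sub>m (f(a\<^sub>m) + \<Sum>\<^sub>k\<^sub>\<noteq>\<^sub>m x(k) \<langle>g(a\<^sub>k), f(a\<^sub>m)\<rangle> / (m - k))\<close> with
  \<open>c\<^sub>m = \<sigma>(a\<^sub>m - s - 1/2) / (1 - M\<^sub>s(a\<^sub>m, a\<^sub>m))\<close>. Since \<open>J\<^sub>n(2L) = O(L\<^sup>|\<^sup>n\<^sup>|)\<close>, the
  off-diagonal coefficients are \<open>O(L)\<close> and decay geometrically in \<open>k\<close>, while \<open>c\<^sub>m\<close> stays bounded
  because \<open>\<sigma>(a - s - 1/2)\<close> is bounded away from \<open>1\<close> for \<open>a < 0\<close>, the only place where
  \<open>M\<^sub>s(a, a)\<close> is not small. Hence for small \<open>L\<close> the system is a contraction on bounded sequences.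
  The residues at \<open>a\<^sub>k\<close> are \<open>O(L\<^sup>2\<^sup>|\<^sup>k\<^sup>|)\<close>, so up to \<open>O(L\<^sup>4)\<close> only the poles \<open>a\<^sub>-\<^sub>1, a\<^sub>0, a\<^sub>1\<close>
  matter, and there the solution inherits polynomial expansions in \<open>L\<close> from the Bessel functions,
  by bootstrapping in the linear system.
\<close>

section \<open>Sums dominated by a summable weight\<close>

lemma abs_summable_on_dominated:
  fixes f w :: "'a \<Rightarrow> real"
  assumes "w summable_on UNIV" and "\<And>k. k \<in> A \<Longrightarrow> \<bar>f k\<bar> \<le> B * w k"
  shows "(\<lambda>k. norm (f k)) summable_on A"
proof (rule Infinite_Sum.abs_summable_on_comparison_test')
  show "(\<lambda>k. B * w k) summable_on A"
    using summable_on_cmult_right[OF assms(1), where c=B] by (rule summable_on_subset) simp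
qed (use assms(2) in auto)

lemma summable_on_dominated:
  fixes f w :: "'a \<Rightarrow> real"
  assumes "w summable_on UNIV" and "\<And>k. k \<in> A \<Longrightarrow> \<bar>f k\<bar> \<le> B * w k"
  shows "f summable_on A"
  using abs_summable_on_dominated[OF assms] by (rule Infinite_Sum.abs_summable_summable)

lemma abs_infsum_le_dominated:
  fixes f w :: "'a \<Rightarrow> real"
  assumes w: "w summable_on UNIV" "\<And>k. 0 \<le> w k"
    and B: "0 \<le> B" and le: "\<And>k. k \<in> A \<Longrightarrow> \<bar>f k\<bar> \<le> B * w k"
  shows "\<bar>\<Sum>\<^sub>\<infinity>k\<in>A. f k\<bar> \<le> B * (\<Sum>\<^sub>\<infinity>k. w k)"
proof -
  have Bw: "(\<lambda>k. B * w k) summable_on X" for X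
    using summable_on_cmult_right[OF w(1), where c=B] by (rule summable_on_subset) simp
  have "norm (\<Sum>\<^sub>\<infinity>k\<in>A. f k) \<le> (\<Sum>\<^sub>\<infinity>k\<in>A. norm (f k))"
    by (rule norm_infsum_bound[OF abs_summable_on_dominated[OF w(1) le]])
  also have "\<dots> \<le> (\<Sum>\<^sub>\<infinity>k\<in>A. B * w k)"
  proof (rule infsum_mono[OF abs_summable_on_dominated[OF w(1) le] Bw])
    fix k assume "k \<in> A"
    then show "norm (f k) \<le> B * w k"
      using le[of k] by simp
  qed
  also have "\<dots> \<le> (\<Sum>\<^sub>\<infinity>k. B * w k)"
    by (rule infsum_mono_neutral[OF Bw Bw]) (simp_all add: B w(2))
  also have "\<dots> = B * (\<Sum>\<^sub>\<infinity>k. w k)"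
    by (rule infsum_cmult_right) (use w in simp)
  finally show ?thesis
    by simp
qed

definition half_pow :: "int \<Rightarrow> real" where
  "half_pow k = (1/2) ^ nat \<bar>k\<bar>"

abbreviation half_pow_sum :: real where
  "half_pow_sum \<equiv> \<Sum>\<^sub>\<infinity>k. half_pow k"

lemma summable_on_half_pow: "half_pow summable_on UNIV"
proof -
  have geom: "(\<lambda>n::nat. (1/2::real) ^ n) summable_on UNIV"
    by (subst summable_on_UNIV_nonneg_real_iff) (auto intro: summable_geometric)
  have "half_pow summable_on range int"
    by (subst summable_on_reindex) (auto simp: o_def half_pow_def geom)
  moreover have "half_pow summable_on range (\<lambda>n::nat. - int n)"
    by (subst summable_on_reindex) (auto simp: inj_on_def o_def half_pow_def geom)
  ultimately have "half_pow summable_on (range int \<union> range (\<lambda>n::nat. - int n))"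
    by (rule summable_on_union)
  moreover have "range int \<union> range (\<lambda>n::nat. - int n) = UNIV"
  proof -
    have "k \<in> range int \<union> range (\<lambda>n::nat. - int n)" for k :: int
      by (cases "0 \<le> k") (auto simp: image_iff intro: exI[of _ "nat \<bar>k\<bar>"])
    then show ?thesis by blast
  qed
  ultimately show ?thesis
    by simp
qed

lemma half_pow_pos: "0 < half_pow k"
  by (simp add: half_pow_def)

lemmas summable_on_half_pow_dominated = summable_on_dominated[OF summable_on_half_pow]
lemmas abs_infsum_le_half_pow_dominated =
  abs_infsum_le_dominated[OF summable_on_half_pow less_imp_le[OF half_pow_pos]]

lemma half_pow_succ_le: "half_pow (k + 1) \<le> 2 * half_pow k"
proof -
  have "(1/2::real) ^ (nat \<bar>k + 1\<bar> + 1) \<le> (1/2) ^ nat \<bar>k\<bar>"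
    by (rule power_decreasing) auto
  then show ?thesis
    by (simp add: half_pow_def)
qed

lemma half_pow_sum_pos: "0 < half_pow_sum"
proof -
  have "sum half_pow {0} \<le> half_pow_sum"
    by (rule finite_sum_le_infsum[OF summable_on_half_pow]) (auto intro: less_imp_le half_pow_pos)
  then show ?thesis
    using half_pow_pos[of 0] by simp
qed

lemma power_abs_le_half_pow:
  fixes L :: real
  assumes "0 \<le> L" "L \<le> 1/2"
  shows "L ^ nat \<bar>k\<bar> \<le> half_pow k"
  unfolding half_pow_def using assms by (intro power_mono) auto

text \<open>The terms of index \<open>k\<close> in the error estimates are squares \<open>L\<^sup>2\<^sup>\<bar>\<^sup>k\<^sup>\<bar>\<close>: one factor
  \<open>L\<^sup>2\<^sup>j\<close> is kept and the rest is absorbed into the summable weight.\<close>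
lemma power_double_abs_le_half_pow:
  fixes L :: real
  assumes L: "0 \<le> L" "L \<le> 1/2" and j: "j \<le> nat \<bar>k\<bar>"
  shows "L ^ (2 * nat \<bar>k\<bar>) \<le> 4 ^ j * L ^ (2 * j) * half_pow k"
proof -
  define e where "e = nat \<bar>k\<bar>"
  have "L ^ (2 * e) = L ^ (2 * j) * L ^ (2 * e - 2 * j)"
    using j by (simp add: e_def power_add[symmetric])
  also have "\<dots> \<le> L ^ (2 * j) * (1/2) ^ (2 * e - 2 * j)"
    using L by (intro mult_left_mono power_mono) auto
  also have "(1/2::real) ^ (2 * e - 2 * j) = 4 ^ j * ((1/2) ^ e * (1/2) ^ e)"
  proof -
    have "(1/2::real) ^ (2 * e - 2 * j) * (1/2) ^ (2 * j) = (1/2) ^ e * (1/2) ^ e"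
      using j by (simp add: e_def power_add[symmetric] mult_2)
    moreover have "(1/2::real) ^ (2 * j) * 4 ^ j = 1"
      by (simp add: power_mult power_divide)
    ultimately show ?thesis
      by (metis mult.assoc mult.commute mult_1_right)
  qed
  also have "L ^ (2 * j) * (4 ^ j * ((1/2) ^ e * (1/2) ^ e)) \<le> L ^ (2 * j) * (4 ^ j * (1/2) ^ e)"
    by (intro mult_left_mono) (auto simp: power_le_one mult_left_le)
  finally show ?thesis
    unfolding half_pow_def e_def[symmetric] by (simp only: mult.assoc mult.left_commute[of "4 ^ j"])
qed

lemma sums_dominated:
  fixes f g :: "nat \<Rightarrow> real"
  assumes "\<And>k. \<bar>f k\<bar> \<le> g k" "g sums G"
  shows "summable f" "\<bar>suminf f\<bar> \<le> G"
proof -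
  have sg: "summable g"
    using assms(2) sums_summable by blast
  have sa: "summable (\<lambda>k. \<bar>f k\<bar>)"
    by (rule summable_comparison_test[OF _ sg]) (use assms(1) in auto)
  then show "summable f"
    using summable_rabs_cancel by blast
  have "\<bar>suminf f\<bar> \<le> (\<Sum>k. \<bar>f k\<bar>)"
    by (rule summable_rabs[OF sa])
  also have "\<dots> \<le> suminf g"
    by (rule suminf_le[OF assms(1) sa sg])
  also have "\<dots> = G"
    using assms(2) sums_unique by metis
  finally show "\<bar>suminf f\<bar> \<le> G" .
qed

definition besselJ_term :: "nat \<Rightarrow> real \<Rightarrow> nat \<Rightarrow> real" where
  "besselJ_term n x k = (-1)^k / (fact k * fact (k + n)) * (x/2)^(2*k + n)"

lemma besselJ_nat_eq_suminf: "besselJ_nat n x = suminf (besselJ_term n x)"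
  unfolding besselJ_nat_def besselJ_term_def by simp

lemma abs_besselJ_term_le: "\<bar>besselJ_term n x k\<bar> \<le> (\<bar>x\<bar>/2)^n * (((x/2)^2)^k /\<^sub>R fact k)"
proof -
  have "\<bar>besselJ_term n x k\<bar> = (\<bar>x\<bar>/2)^(2*k+n) / (fact k * fact (k+n))"
    by (simp add: besselJ_term_def abs_mult power_abs)
  also have "\<dots> \<le> (\<bar>x\<bar>/2)^(2*k+n) / fact k"
    by (rule divide_left_mono) (auto intro!: mult_pos_pos simp: fact_gt_zero)
  also have "((x/2)^2)^k = (\<bar>x\<bar>/2)^(2*k)"
    by (metis abs_divide abs_numeral power2_abs power_mult)
  then have "(\<bar>x\<bar>/2)^(2*k+n) / fact k = (\<bar>x\<bar>/2)^n * (((x/2)^2)^k /\<^sub>R fact k)"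
    by (simp add: power_add field_simps)
  finally show ?thesis .
qed

lemma abs_besselJ_nat_le: "\<bar>besselJ_nat n x\<bar> \<le> (\<bar>x\<bar>/2)^n * exp ((x/2)^2)"
proof -
  have "(\<lambda>k. (\<bar>x\<bar>/2)^n * (((x/2)^2)^k /\<^sub>R fact k)) sums ((\<bar>x\<bar>/2)^n * exp ((x/2)^2))"
    by (intro sums_mult exp_converges)
  then show ?thesis
    unfolding besselJ_nat_eq_suminf by (rule sums_dominated(2)[OF abs_besselJ_term_le])
qed

lemma exp_square_le_3:
  fixes L :: real
  assumes "0 \<le> L" "L \<le> 1"
  shows "exp (L\<^sup>2) \<le> 3"
proof -
  have "exp (L\<^sup>2) \<le> exp 1"
    using assms by (simp add: power_le_one)
  then show ?thesis
    using exp_le by linarith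
qed

lemma besselJ_nat_two_terms:
  assumes "0 \<le> L" "L \<le> 1"
  shows "\<bar>besselJ_nat n (2*L) - (L^n / fact n - L^(n+2) / fact (n+1))\<bar> \<le> 3 * L^4"
proof -
  have "(\<lambda>k. (\<bar>2*L\<bar>/2)^n * (((2*L/2)^2)^k /\<^sub>R fact k)) sums ((\<bar>2*L\<bar>/2)^n * exp ((2*L/2)^2))"
    by (intro sums_mult exp_converges)
  then have sm: "summable (besselJ_term n (2*L))"
    by (rule sums_dominated(1)[OF abs_besselJ_term_le])
  have split: "suminf (besselJ_term n (2*L)) = (\<Sum>k. besselJ_term n (2*L) (k+2)) + (\<Sum>k<2. besselJ_term n (2*L) k)"
    by (rule suminf_split_initial_segment[OF sm])
  have head: "(\<Sum>k<2. besselJ_term n (2*L) k) = L^n / fact n - L^(n+2) / fact (n+1)"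
    by (simp add: besselJ_term_def numeral_2_eq_2 field_simps)
  have tail: "\<bar>besselJ_term n (2*L) (k+2)\<bar> \<le> L^4 * ((L^2)^k /\<^sub>R fact k)" for k
  proof -
    have exponent: "2*(k+2)+n = 2*k+4+n"
      by simp
    have "besselJ_term n (2*L) (k+2) = (-1)^(k+2) / (fact (k+2) * fact (k+2+n)) * L^(2*k+4+n)"
      unfolding besselJ_term_def exponent by simp
    then have "\<bar>besselJ_term n (2*L) (k+2)\<bar> = L^(2*k+4+n) / (fact (k+2) * fact (k+2+n))"
      using assms by (simp add: abs_mult power_abs)
    also have "\<dots> \<le> L^(2*k+4+n) / fact k"
    proof (rule divide_left_mono)
      have "fact k * 1 \<le> fact (k+2) * (fact (k+2+n)::real)"
        by (rule mult_mono[OF fact_mono fact_ge_1]) auto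
      then show "fact k \<le> fact (k+2) * (fact (k+2+n)::real)"
        by simp
    qed (use assms in auto)
    also have "L^(2*k+4+n) = (L^2)^k * L^4 * L^n"
      by (simp only: power_add power_mult)
    then have "L^(2*k+4+n) / fact k = L^4 * ((L^2)^k / fact k) * L^n"
      by (simp add: mult_ac)
    also have "\<dots> \<le> L^4 * ((L^2)^k / fact k) * 1"
      by (rule mult_left_mono) (use assms in \<open>auto simp: power_le_one\<close>)
    finally show ?thesis
      by (simp add: field_simps)
  qed
  have "(\<lambda>k. L^4 * ((L^2)^k /\<^sub>R fact k)) sums (L^4 * exp (L^2))"
    by (intro sums_mult exp_converges)
  then have "\<bar>\<Sum>k. besselJ_term n (2*L) (k+2)\<bar> \<le> L^4 * exp (L^2)"
    by (rule sums_dominated(2)[OF tail])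
  also have "\<dots> \<le> L^4 * 3"
    by (rule mult_left_mono[OF exp_square_le_3[OF assms]]) simp
  finally show ?thesis
    using split head by (simp add: besselJ_nat_eq_suminf)
qed

definition J :: "real \<Rightarrow> int \<Rightarrow> real" where
  "J L n = besselJ n (2 * L)"

lemma abs_J_le_exp:
  assumes "0 \<le> L"
  shows "\<bar>J L n\<bar> \<le> L ^ nat \<bar>n\<bar> * exp (L\<^sup>2)"
  using abs_besselJ_nat_le[of "nat \<bar>n\<bar>" "2*L"] assms
  by (auto simp: J_def besselJ_def abs_mult)

lemma abs_J_le:
  assumes "0 \<le> L" "L \<le> 1"
  shows "\<bar>J L n\<bar> \<le> 3 * L ^ nat \<bar>n\<bar>"
proof -
  have "\<bar>J L n\<bar> \<le> L ^ nat \<bar>n\<bar> * exp (L\<^sup>2)"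
    by (rule abs_J_le_exp[OF assms(1)])
  also have "\<dots> \<le> L ^ nat \<bar>n\<bar> * 3"
    by (rule mult_left_mono[OF exp_square_le_3[OF assms]]) (use assms in simp)
  finally show ?thesis
    by simp
qed

lemma abs_J_le_3:
  assumes "0 \<le> L" "L \<le> 1"
  shows "\<bar>J L n\<bar> \<le> 3"
  using abs_J_le[OF assms, of n] power_le_one[of L "nat \<bar>n\<bar>"] assms by linarith

lemma abs_J_le_half_pow:
  assumes "0 \<le> L" "L \<le> 1/2"
  shows "\<bar>J L n\<bar> \<le> 3 * half_pow n"
  using abs_J_le[of L n] power_abs_le_half_pow[OF assms, of n] assms by linarith

lemma abs_J_succ_le_half_pow:
  assumes "0 \<le> L" "L \<le> 1/2"
  shows "\<bar>J L (n + 1)\<bar> \<le> 6 * half_pow n"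
  using abs_J_le_half_pow[OF assms, of "n + 1"] half_pow_succ_le[of n] by linarith

lemma L_abs_J_succ_le:
  assumes "0 \<le> L" "L \<le> 1"
  shows "L * \<bar>J L (n + 1)\<bar> \<le> 3 * L ^ nat \<bar>n\<bar>"
proof -
  have "L * \<bar>J L (n + 1)\<bar> \<le> L * (3 * L ^ nat \<bar>n + 1\<bar>)"
    using abs_J_le[OF assms] assms by (intro mult_left_mono) auto
  also have "\<dots> = 3 * L ^ (nat \<bar>n + 1\<bar> + 1)"
    by (simp add: algebra_simps)
  also have "\<dots> \<le> 3 * L ^ nat \<bar>n\<bar>"
    using assms by (intro mult_left_mono power_decreasing) auto
  finally show ?thesis .
qed

section \<open>Polynomial expansions at L = 0\<close>

lemma bigo_power_at_right_0I:
  fixes f :: "real \<Rightarrow> real"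
  assumes "\<forall>\<^sub>F L in at_right 0. \<bar>f L\<bar> \<le> C * L ^ n"
  shows "f \<in> O[at_right 0](\<lambda>L. L ^ n)"
proof (rule bigoI[of _ C])
  show "\<forall>\<^sub>F L in at_right 0. norm (f L) \<le> C * norm (L ^ n)"
    using eventually_conj[OF assms eventually_at_right_less[of "0::real"]]
    by (rule eventually_mono) simp
qed

lemma bigo_power_at_right_0E:
  fixes f :: "real \<Rightarrow> real"
  assumes "f \<in> O[at_right 0](\<lambda>L. L ^ n)"
  obtains C \<delta> where "0 < \<delta>" "\<And>L. 0 < L \<Longrightarrow> L < \<delta> \<Longrightarrow> \<bar>f L\<bar> \<le> C * L ^ n"
proof -
  obtain C where "\<forall>\<^sub>F L in at_right 0. norm (f L) \<le> C * norm (L ^ n)"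
    using assms by (elim landau_o.bigE)
  then obtain \<delta> where "0 < \<delta>" "\<And>L. 0 < L \<Longrightarrow> L < \<delta> \<Longrightarrow> norm (f L) \<le> C * norm (L ^ n)"
    unfolding eventually_at_right_field by auto
  then show ?thesis
    using that[of \<delta> C] by simp
qed

lemma bigo_power_mono:
  assumes "m \<le> n"
  shows "(\<lambda>L::real. L ^ n) \<in> O[at_right 0](\<lambda>L. L ^ m)"
proof (rule bigo_power_at_right_0I[of _ 1])
  have "\<forall>\<^sub>F L in at_right (0::real). 0 < L \<and> L < 1"
    unfolding eventually_at_right_field by (rule exI[of _ 1]) auto
  then show "\<forall>\<^sub>F L in at_right 0. \<bar>(L::real) ^ n\<bar> \<le> 1 * L ^ m"
    by eventually_elim (use assms in \<open>auto intro: power_decreasing\<close>)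
qed

lemma tendsto_0_if_bigo_power:
  fixes f :: "real \<Rightarrow> real"
  assumes "f \<in> O[at_right 0](\<lambda>L. L ^ Suc n)"
  shows "(f \<longlongrightarrow> 0) (at_right 0)"
proof -
  obtain c where "\<forall>\<^sub>F L in at_right 0. norm (f L) \<le> c * norm (L ^ Suc n)"
    using assms by (elim landau_o.bigE)
  moreover have "((\<lambda>L::real. c * norm (L ^ Suc n)) \<longlongrightarrow> 0) (at_right 0)"
    by (rule tendsto_eq_intros refl | simp)+
  ultimately show ?thesis
    by (rule Lim_null_comparison)
qed

lemma bigo_1_poly: "(\<lambda>L. poly p L) \<in> O[at_right 0](\<lambda>_. 1)"
  by (rule bigoI_tendsto[where c="poly p 0"]) (auto intro!: tendsto_eq_intros)

definition poly_expansion :: "nat \<Rightarrow> (real \<Rightarrow> real) \<Rightarrow> bool" where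
  "poly_expansion n f \<longleftrightarrow> (\<exists>p. (\<lambda>L. f L - poly p L) \<in> O[at_right 0](\<lambda>L. L ^ n))"

lemma poly_expansionE:
  assumes "poly_expansion n f"
  obtains p where "(\<lambda>L. f L - poly p L) \<in> O[at_right 0](\<lambda>L. L ^ n)"
  using assms unfolding poly_expansion_def by blast

lemma poly_expansion_of_bigo:
  assumes "(\<lambda>L. f L - g L) \<in> O[at_right 0](\<lambda>L. L ^ n)" and "poly_expansion n g"
  shows "poly_expansion n f"
proof -
  obtain p where "(\<lambda>L. g L - poly p L) \<in> O[at_right 0](\<lambda>L. L ^ n)"
    using assms(2) by (rule poly_expansionE)
  from sum_in_bigo(1)[OF assms(1) this] show ?thesis
    unfolding poly_expansion_def by auto
qed

lemma poly_expansion_poly: "poly_expansion n (\<lambda>L. poly p L)"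
  unfolding poly_expansion_def by (rule exI[of _ p]) simp

lemma poly_expansion_const: "poly_expansion n (\<lambda>L. c)"
  using poly_expansion_poly[of n "[:c:]"] by simp

lemma poly_expansion_bigo: "f \<in> O[at_right 0](\<lambda>L. L ^ n) \<Longrightarrow> poly_expansion n f"
  using poly_expansion_of_bigo[OF _ poly_expansion_const[of n 0]] by simp

lemma poly_expansion_cong:
  assumes "poly_expansion n f" and "\<forall>\<^sub>F L in at_right 0. f L = g L"
  shows "poly_expansion n g"
proof -
  have "(\<lambda>L. g L - f L) \<in> O[at_right 0](\<lambda>L. L ^ n)"
    using assms(2) by (intro bigo_power_at_right_0I[of _ 0]) (auto elim: eventually_mono)
  then show ?thesis
    using assms(1) by (rule poly_expansion_of_bigo)
qed

lemma poly_expansion_mono: "poly_expansion n f \<Longrightarrow> m \<le> n \<Longrightarrow> poly_expansion m f"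
  unfolding poly_expansion_def using landau_o.big_trans bigo_power_mono by blast

lemma poly_expansion_add:
  assumes "poly_expansion n f" "poly_expansion n g"
  shows "poly_expansion n (\<lambda>L. f L + g L)"
proof -
  obtain p q where "(\<lambda>L. f L - poly p L) \<in> O[at_right 0](\<lambda>L. L ^ n)"
    "(\<lambda>L. g L - poly q L) \<in> O[at_right 0](\<lambda>L. L ^ n)"
    using assms by (elim poly_expansionE)
  from sum_in_bigo(1)[OF this] have "(\<lambda>L. f L + g L - poly (p + q) L) \<in> O[at_right 0](\<lambda>L. L ^ n)"
    by (simp add: algebra_simps)
  then show ?thesis
    unfolding poly_expansion_def by blast
qed

lemma poly_expansion_cmult:
  assumes "poly_expansion n f"
  shows "poly_expansion n (\<lambda>L. c * f L)"
proof -
  obtain p where "(\<lambda>L. f L - poly p L) \<in> O[at_right 0](\<lambda>L. L ^ n)"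
    using assms by (rule poly_expansionE)
  then have "(\<lambda>L. c * f L - poly (smult c p) L) \<in> O[at_right 0](\<lambda>L. L ^ n)"
    by (simp add: right_diff_distrib[symmetric])
  then show ?thesis
    unfolding poly_expansion_def by blast
qed

lemma poly_expansion_diff:
  assumes "poly_expansion n f" "poly_expansion n g"
  shows "poly_expansion n (\<lambda>L. f L - g L)"
  using poly_expansion_add[OF assms(1) poly_expansion_cmult[OF assms(2), of "-1"]] by simp

lemma poly_expansion_sum:
  "(\<And>i. i \<in> A \<Longrightarrow> poly_expansion n (f i)) \<Longrightarrow> poly_expansion n (\<lambda>L. \<Sum>i\<in>A. f i L)"
proof (induction A rule: infinite_finite_induct)
  case (insert x F)
  then show ?case
    using poly_expansion_add[of n "f x" "\<lambda>L. \<Sum>i\<in>F. f i L"] by simp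
qed (simp_all add: poly_expansion_const)

lemma bigo_1_if_poly_expansion:
  assumes "poly_expansion n f"
  shows "f \<in> O[at_right 0](\<lambda>_. 1)"
proof -
  obtain p where "(\<lambda>L. f L - poly p L) \<in> O[at_right 0](\<lambda>L. L ^ n)"
    using assms by (rule poly_expansionE)
  then have "(\<lambda>L. f L - poly p L) \<in> O[at_right 0](\<lambda>L. L ^ 0)"
    using bigo_power_mono[of 0 n] by (blast intro: landau_o.big_trans)
  from sum_in_bigo(1)[OF this[simplified] bigo_1_poly[of p]] show ?thesis
    by simp
qed

lemma poly_expansion_mult:
  assumes "poly_expansion n f" "poly_expansion n g"
  shows "poly_expansion n (\<lambda>L. f L * g L)"
proof -
  obtain p q where p: "(\<lambda>L. f L - poly p L) \<in> O[at_right 0](\<lambda>L. L ^ n)"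
    and q: "(\<lambda>L. g L - poly q L) \<in> O[at_right 0](\<lambda>L. L ^ n)"
    using assms by (elim poly_expansionE)
  have "(\<lambda>L. g L * (f L - poly p L) + poly p L * (g L - poly q L)) \<in> O[at_right 0](\<lambda>L. L ^ n)"
    using sum_in_bigo(1)[OF landau_o.big.mult[OF bigo_1_if_poly_expansion[OF assms(2)] p]
        landau_o.big.mult[OF bigo_1_poly q]]
    by simp
  then have "(\<lambda>L. f L * g L - poly (p * q) L) \<in> O[at_right 0](\<lambda>L. L ^ n)"
    by (simp add: algebra_simps)
  then show ?thesis
    unfolding poly_expansion_def by blast
qed

lemma poly_expansion_mult_L:
  assumes "poly_expansion n f"
  shows "poly_expansion (Suc n) (\<lambda>L. L * f L)"
proof -
  obtain p where "(\<lambda>L. f L - poly p L) \<in> O[at_right 0](\<lambda>L. L ^ n)"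
    using assms by (rule poly_expansionE)
  from landau_o.big.mult[OF landau_o.big_refl[of "\<lambda>L. L"] this]
  have "(\<lambda>L. L * f L - poly (pCons 0 p) L) \<in> O[at_right 0](\<lambda>L. L ^ Suc n)"
    by (simp add: algebra_simps)
  then show ?thesis
    unfolding poly_expansion_def by blast
qed

lemma poly_expansion_inverse:
  assumes f: "poly_expansion n f" and d: "0 < d" "\<forall>\<^sub>F L in at_right 0. d \<le> \<bar>f L\<bar>"
  shows "poly_expansion n (\<lambda>L. 1 / f L)"
proof -
  have inv_bounded: "(\<lambda>L. 1 / f L) \<in> O[at_right 0](\<lambda>_. 1)"
    using d(2) by (intro bigoI[of _ "1 / d"]) (auto elim!: eventually_mono simp: d(1) frac_le)
  obtain p where p: "(\<lambda>L. f L - poly p L) \<in> O[at_right 0](\<lambda>L. L ^ n)"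
    using f by (rule poly_expansionE)
  obtain a r where ar: "p = pCons a r"
    by (cases p) auto
  have "poly_expansion j (\<lambda>L. 1 / f L)" if "j \<le> n" for j
    using that
  proof (induction j)
    case 0
    show ?case
      using inv_bounded by (intro poly_expansion_bigo) simp
  next
    case (Suc j)
    have IH: "poly_expansion j (\<lambda>L. 1 / f L)"
      using Suc by simp
    have p': "(\<lambda>L. f L - poly p L) \<in> O[at_right 0](\<lambda>L. L ^ Suc j)"
      using p bigo_power_mono[OF Suc.prems] by (blast intro: landau_o.big_trans)
    text \<open>The constant term \<open>a\<close> of the expansion is the limit of \<open>f\<close>, hence \<open>\<bar>a\<bar> \<ge> d\<close>.\<close>
    have "((\<lambda>L. (f L - poly p L) + poly p L) \<longlongrightarrow> 0 + poly p 0) (at_right 0)"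
      by (rule tendsto_add[OF tendsto_0_if_bigo_power[OF p']]) (auto intro!: tendsto_eq_intros)
    then have "d \<le> \<bar>a\<bar>"
      using d(2) by (intro tendsto_lowerbound[OF tendsto_rabs]) (auto simp: ar)
    then have a: "a \<noteq> 0"
      using d(1) by auto
    from landau_o.big.mult[OF inv_bounded p']
    have "(\<lambda>L. 1 / f L * (f L - poly p L)) \<in> O[at_right 0](\<lambda>L. L ^ Suc j)"
      by simp
    then have "poly_expansion (Suc j)
        (\<lambda>L. 1 / a - 1 / a * (L * (poly r L * (1 / f L))) - 1 / a * (1 / f L * (f L - poly p L)))"
      by (intro poly_expansion_diff poly_expansion_const poly_expansion_cmult
          poly_expansion_mult_L poly_expansion_mult poly_expansion_poly IH poly_expansion_bigo)
    moreover have "\<forall>\<^sub>F L in at_right 0.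
        1 / a - 1 / a * (L * (poly r L * (1 / f L))) - 1 / a * (1 / f L * (f L - poly p L)) = 1 / f L"
      using d(2) by (rule eventually_mono) (use a d(1) in \<open>auto simp: ar field_simps\<close>)
    ultimately show ?case
      by (rule poly_expansion_cong)
  qed
  then show ?thesis
    by simp
qed

lemma poly_truncation_bigo:
  fixes p :: "real poly"
  shows "(\<lambda>L. poly p L - (\<Sum>d<n. coeff p d * L ^ d)) \<in> O[at_right 0](\<lambda>L. L ^ n)"
proof (rule bigo_power_at_right_0I)
  define N where "N = max n (Suc (degree p))"
  have tail: "poly p L - (\<Sum>d<n. coeff p d * L ^ d) = (\<Sum>d\<in>{n..<N}. coeff p d * L ^ d)" for L :: real
  proof -
    have "poly p L = (\<Sum>d<N. coeff p d * L ^ d)"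
      unfolding poly_altdef by (rule sum.mono_neutral_left) (auto simp: N_def coeff_eq_0)
    also have "{..<N} = {..<n} \<union> {n..<N}"
      by (auto simp: N_def)
    finally show ?thesis
      by (subst (asm) sum.union_disjoint) auto
  qed
  have "\<forall>\<^sub>F L in at_right (0::real). 0 < L \<and> L < 1"
    unfolding eventually_at_right_field by (rule exI[of _ 1]) auto
  then show "\<forall>\<^sub>F L in at_right 0.
      \<bar>poly p L - (\<Sum>d<n. coeff p d * L ^ d)\<bar> \<le> (\<Sum>d\<in>{n..<N}. \<bar>coeff p d\<bar>) * L ^ n"
  proof (rule eventually_mono)
    fix L :: real assume L: "0 < L \<and> L < 1"
    have "\<bar>\<Sum>d\<in>{n..<N}. coeff p d * L ^ d\<bar> \<le> (\<Sum>d\<in>{n..<N}. \<bar>coeff p d\<bar> * L ^ n)"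
    proof (rule order_trans[OF sum_abs sum_mono])
      fix d assume "d \<in> {n..<N}"
      then have "L ^ d \<le> L ^ n"
        using L by (intro power_decreasing) auto
      then show "\<bar>coeff p d * L ^ d\<bar> \<le> \<bar>coeff p d\<bar> * L ^ n"
        using L by (simp add: abs_mult mult_left_mono)
    qed
    then show "\<bar>poly p L - (\<Sum>d<n. coeff p d * L ^ d)\<bar> \<le> (\<Sum>d\<in>{n..<N}. \<bar>coeff p d\<bar>) * L ^ n"
      by (simp add: tail sum_distrib_right)
  qed
qed

lemma poly_expansion_J: "poly_expansion 4 (\<lambda>L. J L n)"
proof -
  have nat: "poly_expansion 4 (\<lambda>L. besselJ_nat m (2 * L))" for m
  proof (rule poly_expansion_of_bigo)
    have "\<forall>\<^sub>F L in at_right (0::real). 0 < L \<and> L < 1"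
      unfolding eventually_at_right_field by (rule exI[of _ 1]) auto
    then show "(\<lambda>L. besselJ_nat m (2 * L) - (L ^ m / fact m - L ^ (m + 2) / fact (m + 1)))
        \<in> O[at_right 0](\<lambda>L. L ^ 4)"
      by (intro bigo_power_at_right_0I[of _ 3], rule eventually_mono)
         (intro besselJ_nat_two_terms, auto)
    show "poly_expansion 4 (\<lambda>L. L ^ m / fact m - L ^ (m + 2) / fact (m + 1))"
      using poly_expansion_diff[OF poly_expansion_poly[of 4 "monom (1 / fact m) m"]
          poly_expansion_poly[of 4 "monom (1 / fact (m + 1)) (m + 2)"]]
      by (simp add: poly_monom)
  qed
  show ?thesis
  proof (cases "0 \<le> n")
    case True
    then show ?thesis
      using nat[of "nat n"] by (simp add: J_def besselJ_def)
  next
    case False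
    then show ?thesis
      using poly_expansion_cmult[OF nat[of "nat (- n)"], of "(-1) ^ nat (- n)"]
      by (simp add: J_def besselJ_def)
  qed
qed

lemma J_sq_le_half_pow:
  assumes L: "0 \<le> L" "L \<le> 1/2" and j: "j \<le> nat \<bar>n\<bar>"
  shows "(J L n)\<^sup>2 \<le> 9 * 4 ^ j * L ^ (2 * j) * half_pow n"
proof -
  have "\<bar>J L n\<bar> \<le> 3 * L ^ nat \<bar>n\<bar>"
    using abs_J_le[of L n] L by simp
  then have "\<bar>J L n\<bar>\<^sup>2 \<le> (3 * L ^ nat \<bar>n\<bar>)\<^sup>2"
    by (intro power_mono) simp_all
  then have "(J L n)\<^sup>2 \<le> (3 * L ^ nat \<bar>n\<bar>)\<^sup>2"
    by simp
  also have "\<dots> = 9 * L ^ (2 * nat \<bar>n\<bar>)"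
    by (simp add: power_mult_distrib power_mult[symmetric] mult.commute)
  also have "\<dots> \<le> 9 * (4 ^ j * L ^ (2 * j) * half_pow n)"
    by (intro mult_left_mono power_double_abs_le_half_pow[OF L j]) simp
  finally show ?thesis
    by simp
qed

lemma infsum_J_sq_le:
  assumes L: "0 \<le> L" "L \<le> 1/2" and j: "\<And>n. n \<in> A \<Longrightarrow> j \<le> nat \<bar>n\<bar>"
  shows "(\<Sum>\<^sub>\<infinity>n\<in>A. (J L n)\<^sup>2) \<le> 9 * 4 ^ j * L ^ (2 * j) * half_pow_sum"
  using abs_infsum_le_half_pow_dominated[of "9 * 4 ^ j * L ^ (2 * j)" A "\<lambda>n. (J L n)\<^sup>2"]
    J_sq_le_half_pow[OF L j] L by simp

lemma summable_on_J_sq: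
  assumes "0 \<le> L" "L \<le> 1/2"
  shows "(\<lambda>n. (J L n)\<^sup>2) summable_on A"
  by (rule summable_on_half_pow_dominated[of A _ 9]) (use J_sq_le_half_pow[OF assms, of 0] in simp)

lemma KBe_eq_infsum:
  assumes L: "0 \<le> L" "L \<le> 1/2"
  shows "KBe L m = (\<Sum>\<^sub>\<infinity>n\<in>{m<..}. (J L n)\<^sup>2)"
proof -
  define h where "h k = m + int k + 1" for k :: nat
  have inj: "inj h"
    unfolding h_def inj_on_def by auto
  have range: "range h = {m<..}"
  proof
    show "{m<..} \<subseteq> range h"
    proof
      fix n assume "n \<in> {m<..}"
      then have "n = h (nat (n - m - 1))"
        unfolding h_def by simp
      then show "n \<in> range h"
        by blast
    qed
  qed (auto simp: h_def)
  have "(\<lambda>k. (J L (h k))\<^sup>2) summable_on UNIV"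
    using summable_on_reindex[OF inj, of "\<lambda>n. (J L n)\<^sup>2"] summable_on_J_sq[OF L, of "range h"]
    by (simp add: o_def)
  then have "summable (\<lambda>k. (J L (h k))\<^sup>2)"
    by (simp add: summable_on_UNIV_nonneg_real_iff)
  then have "(\<Sum>\<^sub>\<infinity>k. (J L (h k))\<^sup>2) = (\<Sum>k. (J L (h k))\<^sup>2)"
    by (intro infsumI sums_nonneg_imp_has_sum) (auto simp: summable_sums)
  moreover have "(\<Sum>\<^sub>\<infinity>n\<in>range h. (J L n)\<^sup>2) = (\<Sum>\<^sub>\<infinity>k. (J L (h k))\<^sup>2)"
    using infsum_reindex[OF inj] by (simp add: o_def)
  ultimately show ?thesis
    unfolding KBe_def J_def h_def range[symmetric] by (simp add: add_ac)
qed

lemma KBe_nonneg: "0 \<le> L \<Longrightarrow> L \<le> 1/2 \<Longrightarrow> 0 \<le> KBe L m"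
  by (simp add: KBe_eq_infsum infsum_nonneg)

lemma J_0_sq_le:
  assumes L: "0 \<le> L" "L \<le> 1/2"
  shows "(J L 0)\<^sup>2 \<le> 1 + 4 * L\<^sup>2"
proof -
  have "\<bar>J L 0\<bar>\<^sup>2 \<le> (exp (L\<^sup>2))\<^sup>2"
    using abs_J_le_exp[OF L(1), of 0] by (intro power_mono) simp_all
  then have "(J L 0)\<^sup>2 \<le> (exp (L\<^sup>2))\<^sup>2"
    by simp
  also have "\<dots> = exp (2 * L\<^sup>2)"
    by (simp add: exp_add[symmetric] power2_eq_square)
  also have "\<dots> \<le> 1 + 2 * (2 * L\<^sup>2)"
  proof -
    have "L * L \<le> (1/2) * (1/2)"
      using L by (intro mult_mono) auto
    then have "norm (2 * L\<^sup>2) \<le> 1/2"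
      by (simp add: power2_eq_square)
    from exp_bound_lemma[OF this] show ?thesis
      by simp
  qed
  finally show ?thesis
    by simp
qed

definition KBe_const :: real where
  "KBe_const = 4 + 36 * half_pow_sum"

lemma KBe_le:
  assumes L: "0 \<le> L" "L \<le> 1/2"
  shows "KBe L m \<le> 1 + KBe_const * L\<^sup>2"
proof -
  have sq: "(\<lambda>n. (J L n)\<^sup>2) summable_on A" for A
    by (rule summable_on_J_sq[OF L])
  have "(\<Sum>\<^sub>\<infinity>n\<in>{m<..}. (J L n)\<^sup>2) \<le> (J L 0)\<^sup>2 + (\<Sum>\<^sub>\<infinity>n\<in>{m<..} - {0}. (J L n)\<^sup>2)"
  proof (cases "0 \<in> {m<..}")
    case True
    then have "{m<..} = insert 0 ({m<..} - {0})"
      by auto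
    then show ?thesis
      using infsum_insert[OF sq, of 0 "{m<..} - {0}"] by simp
  qed simp
  also have "(\<Sum>\<^sub>\<infinity>n\<in>{m<..} - {0}. (J L n)\<^sup>2) \<le> 36 * half_pow_sum * L\<^sup>2"
  proof -
    have "(\<Sum>\<^sub>\<infinity>n\<in>{m<..} - {0}. (J L n)\<^sup>2) \<le> 9 * 4 ^ 1 * L ^ (2 * 1) * half_pow_sum"
      by (rule infsum_J_sq_le[OF L]) auto
    then show ?thesis
      by (simp add: mult_ac)
  qed
  finally show ?thesis
    using J_0_sq_le[OF L] unfolding KBe_eq_infsum[OF L] KBe_const_def distrib_right by linarith
qed

lemma KBe_le_of_nonneg:
  assumes L: "0 \<le> L" "L \<le> 1/2" and m: "0 \<le> m"
  shows "KBe L m \<le> KBe_const * L\<^sup>2"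
proof -
  have "KBe L m \<le> 9 * 4 ^ 1 * L ^ (2 * 1) * half_pow_sum"
    unfolding KBe_eq_infsum[OF L] by (rule infsum_J_sq_le[OF L]) (use m in auto)
  also have "\<dots> \<le> KBe_const * L\<^sup>2"
    unfolding KBe_const_def distrib_right by (simp add: mult_ac)
  finally show ?thesis .
qed

lemma poly_expansion_KBe:
  assumes k: "-1 \<le> k"
  shows "poly_expansion 4 (\<lambda>L. KBe L k)"
proof (rule poly_expansion_of_bigo)
  show "poly_expansion 4 (\<lambda>L. (J L (k + 1))\<^sup>2 + (J L (k + 2))\<^sup>2)"
    unfolding power2_eq_square by (intro poly_expansion_add poly_expansion_mult poly_expansion_J)
  have "\<bar>KBe L k - ((J L (k + 1))\<^sup>2 + (J L (k + 2))\<^sup>2)\<bar> \<le> 144 * half_pow_sum * L ^ 4"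
    if L: "0 \<le> L" "L \<le> 1/2" for L
  proof -
    have split: "{k<..} = {k + 1, k + 2} \<union> {k + 2<..}"
      by auto
    have "KBe L k = (\<Sum>\<^sub>\<infinity>n\<in>{k + 1, k + 2}. (J L n)\<^sup>2) + (\<Sum>\<^sub>\<infinity>n\<in>{k + 2<..}. (J L n)\<^sup>2)"
      unfolding KBe_eq_infsum[OF L] split
      by (rule infsum_Un_disjoint[OF summable_on_J_sq[OF L] summable_on_J_sq[OF L]]) auto
    then have "KBe L k - ((J L (k + 1))\<^sup>2 + (J L (k + 2))\<^sup>2) = (\<Sum>\<^sub>\<infinity>n\<in>{k + 2<..}. (J L n)\<^sup>2)"
      by simp
    moreover have "(\<Sum>\<^sub>\<infinity>n\<in>{k + 2<..}. (J L n)\<^sup>2) \<le> 9 * 4 ^ 2 * L ^ (2 * 2) * half_pow_sum"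
      by (rule infsum_J_sq_le[OF L]) (use k in auto)
    moreover have "0 \<le> (\<Sum>\<^sub>\<infinity>n\<in>{k + 2<..}. (J L n)\<^sup>2)"
      by (simp add: infsum_nonneg)
    ultimately show ?thesis
      by (simp add: mult_ac)
  qed
  moreover have "\<forall>\<^sub>F L in at_right (0::real). 0 < L \<and> L < 1/2"
    unfolding eventually_at_right_field by (rule exI[of _ "1/2"]) auto
  ultimately show "(\<lambda>L. KBe L k - ((J L (k + 1))\<^sup>2 + (J L (k + 2))\<^sup>2)) \<in> O[at_right 0](\<lambda>L. L ^ 4)"
    by (intro bigo_power_at_right_0I[of _ "144 * half_pow_sum"]) (auto elim!: eventually_mono)
qed

section \<open>Sums of simple fractions over the half-integers\<close>

definition hpt :: "int \<Rightarrow> complex" where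
  "hpt k = complex_of_real (of_int k + 1/2)"

definition pfsum :: "(int \<Rightarrow> complex) \<Rightarrow> int set \<Rightarrow> complex \<Rightarrow> complex" where
  "pfsum r I z = (\<Sum>\<^sub>\<infinity>k\<in>I. r k / (z - hpt k))"

lemma halfintC_iff: "z \<in> halfintC \<longleftrightarrow> (\<exists>k. z = hpt k)"
  unfolding halfintC_def halfint_def hpt_def by blast

lemma hpt_diff: "hpt m - hpt k = of_int (m - k)"
  unfolding hpt_def by simp

lemma norm_hpt: "cmod (hpt k) = \<bar>of_int k + 1/2\<bar>"
  unfolding hpt_def by (simp only: norm_of_real)

lemma norm_hpt_diff_ge_1: "m \<noteq> k \<Longrightarrow> 1 \<le> cmod (hpt m - hpt k)"
  unfolding hpt_diff norm_of_int by linarith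

lemma norm_divide_le:
  fixes a w :: "'a::real_normed_field"
  assumes "0 < e" "e \<le> norm w"
  shows "norm (a / w) \<le> norm a / e"
  using assms by (simp add: norm_divide frac_le)

lemma closed_halfintC: "closed halfintC"
proof (rule discrete_imp_closed[of 1])
  show "\<forall>x\<in>halfintC. \<forall>y\<in>halfintC. dist y x < 1 \<longrightarrow> y = x"
  proof (intro ballI impI)
    fix x y assume "x \<in> halfintC" "y \<in> halfintC" "dist y x < 1"
    then obtain m k where "x = hpt m" "y = hpt k" "cmod (hpt k - hpt m) < 1"
      by (auto simp: halfintC_iff dist_norm)
    then show "y = x"
      using norm_hpt_diff_ge_1[of k m] by fastforce
  qed
qed simp

lemma halfintC_separated_ball:
  assumes "z0 \<notin> halfintC"
  obtains e where "0 < e" "\<And>z k. z \<in> ball z0 e \<Longrightarrow> e \<le> cmod (z - hpt k)"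
proof -
  have "open (- halfintC)"
    using closed_halfintC by (simp add: closed_def)
  then obtain e2 where e2: "0 < e2" "ball z0 e2 \<subseteq> - halfintC"
    using assms open_contains_ball by blast
  have "e2 / 2 \<le> cmod (z - hpt k)" if "z \<in> ball z0 (e2 / 2)" for z k
  proof -
    have "hpt k \<notin> ball z0 e2"
      using e2(2) halfintC_iff by blast
    then have "e2 \<le> cmod (z0 - hpt k)"
      by (simp add: dist_norm)
    moreover have "cmod (z0 - hpt k) \<le> cmod (z0 - z) + cmod (z - hpt k)"
      using norm_triangle_ineq[of "z0 - z" "z - hpt k"] by simp
    ultimately show ?thesis
      using that by (simp add: dist_norm)
  qed
  then show ?thesis
    using that[of "e2 / 2"] e2(1) by simp
qed

lemma halfintC_separated_point:
  assumes "z0 \<notin> halfintC"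
  obtains e where "0 < e" "\<And>k. e \<le> cmod (z0 - hpt k)"
  using halfintC_separated_ball[OF assms] by (metis centre_in_ball)

lemma norm_diff_hpt_near:
  assumes "z \<in> ball (hpt m) (1/2)" "k \<noteq> m"
  shows "1/2 \<le> cmod (z - hpt k)"
proof -
  have "1 \<le> cmod (hpt m - hpt k)"
    using norm_hpt_diff_ge_1 assms(2) by auto
  moreover have "cmod (hpt m - hpt k) \<le> cmod (hpt m - z) + cmod (z - hpt k)"
    using norm_triangle_ineq[of "hpt m - z" "z - hpt k"] by simp
  ultimately show ?thesis
    using assms(1) by (simp add: dist_norm)
qed

lemma norm_diff_hpt_on_circle:
  assumes "cmod z = real n"
  shows "1/2 \<le> cmod (z - hpt k)" "real n - \<bar>of_int k\<bar> - 1/2 \<le> cmod (z - hpt k)"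
proof -
  obtain j :: int where j: "real n - \<bar>of_int k + 1/2\<bar> = of_int j + 1/2"
  proof (cases "0 \<le> k")
    case True
    then show ?thesis
      using that[of "int n - k - 1"] by simp
  next
    case False
    then show ?thesis
      using that[of "int n + k"] by simp
  qed
  have gap: "1/2 \<le> \<bar>real n - \<bar>of_int k + 1/2\<bar>\<bar>"
  proof (cases "0 \<le> j")
    case True
    then have "0 \<le> (of_int j::real)"
      by simp
    then show ?thesis
      unfolding j by linarith
  next
    case False
    then have "of_int j \<le> (-1::real)"
      by simp
    then show ?thesis
      unfolding j by linarith
  qed
  have "\<bar>cmod z - cmod (hpt k)\<bar> \<le> cmod (z - hpt k)"
    by (rule norm_triangle_ineq3)
  then show "1/2 \<le> cmod (z - hpt k)" "real n - \<bar>of_int k\<bar> - 1/2 \<le> cmod (z - hpt k)"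
    using gap assms unfolding norm_hpt by linarith+
qed

lemma eventually_infsum_tail_less:
  fixes f :: "'a \<Rightarrow> real"
  assumes "f summable_on I" "0 < d"
  shows "\<forall>\<^sub>F X in finite_subsets_at_top I. \<bar>\<Sum>\<^sub>\<infinity>k\<in>I - X. f k\<bar> < d"
proof -
  have "((\<lambda>X. \<Sum>k\<in>X. f k) \<longlongrightarrow> (\<Sum>\<^sub>\<infinity>k\<in>I. f k)) (finite_subsets_at_top I)"
    using has_sum_infsum[OF assms(1)] unfolding has_sum_def .
  then have "\<forall>\<^sub>F X in finite_subsets_at_top I. dist (\<Sum>k\<in>X. f k) (\<Sum>\<^sub>\<infinity>k\<in>I. f k) < d"
    using assms(2) by (rule tendstoD)
  moreover have "\<forall>\<^sub>F X in finite_subsets_at_top I. finite X \<and> X \<subseteq> I"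
    by (simp add: eventually_finite_subsets_at_top_weakI)
  ultimately show ?thesis
  proof eventually_elim
    case (elim X)
    then have "(\<Sum>\<^sub>\<infinity>k\<in>I - X. f k) = (\<Sum>\<^sub>\<infinity>k\<in>I. f k) - (\<Sum>k\<in>X. f k)"
      by (subst infsum_Diff) (use assms(1) in auto)
    then show ?case
      using elim by (simp add: dist_real_def abs_minus_commute[of "sum f X"])
  qed
qed

lemma norm_sum_partial_fractions_le:
  assumes "0 < e" "\<And>k. k \<in> X \<Longrightarrow> e \<le> cmod (z - hpt k)"
  shows "cmod (\<Sum>k\<in>X. r k / (z - hpt k)) \<le> (\<Sum>k\<in>X. norm (r k)) / e"
proof -
  have "cmod (\<Sum>k\<in>X. r k / (z - hpt k)) \<le> (\<Sum>k\<in>X. norm (r k) / e)"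
  proof (rule order_trans[OF norm_sum sum_mono])
    fix k assume "k \<in> X"
    then show "cmod (r k / (z - hpt k)) \<le> norm (r k) / e"
      using assms by (intro norm_divide_le) auto
  qed
  then show ?thesis
    by (simp add: sum_divide_distrib)
qed

context
  fixes r :: "int \<Rightarrow> complex"
  assumes r: "(\<lambda>k. norm (r k)) summable_on UNIV"
begin

lemma summable_on_norm_residues: "(\<lambda>k. norm (r k)) summable_on I"
  by (rule summable_on_subset[OF r]) auto

lemma summable_on_partial_fractions:
  assumes "0 < e" "\<And>k. k \<in> I \<Longrightarrow> e \<le> cmod (z - hpt k)"
  shows "(\<lambda>k. norm (r k / (z - hpt k))) summable_on I"
proof (rule Infinite_Sum.abs_summable_on_comparison_test')
  show "(\<lambda>k. norm (r k) / e) summable_on I"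
    using summable_on_cmult_left[OF summable_on_norm_residues, of "1/e"] by simp
qed (use assms norm_divide_le in auto)

lemma norm_pfsum_le:
  assumes "0 < e" "\<And>k. k \<in> I \<Longrightarrow> e \<le> cmod (z - hpt k)"
  shows "cmod (pfsum r I z) \<le> (\<Sum>\<^sub>\<infinity>k\<in>I. norm (r k)) / e"
proof -
  have "cmod (pfsum r I z) \<le> (\<Sum>\<^sub>\<infinity>k\<in>I. norm (r k / (z - hpt k)))"
    unfolding pfsum_def by (rule norm_infsum_bound[OF summable_on_partial_fractions[OF assms]])
  also have "\<dots> \<le> (\<Sum>\<^sub>\<infinity>k\<in>I. norm (r k) * (1 / e))"
  proof (rule infsum_mono[OF summable_on_partial_fractions[OF assms]])
    show "(\<lambda>k. norm (r k) * (1 / e)) summable_on I"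
      by (rule summable_on_cmult_left[OF summable_on_norm_residues])
    fix k assume "k \<in> I"
    then show "norm (r k / (z - hpt k)) \<le> norm (r k) * (1 / e)"
      using norm_divide_le[OF assms(1), of "z - hpt k" "r k"] assms(2) by simp
  qed
  also have "\<dots> = (\<Sum>\<^sub>\<infinity>k\<in>I. norm (r k)) * (1 / e)"
    by (rule infsum_cmult_left) (use summable_on_norm_residues in auto)
  finally show ?thesis
    by simp
qed

lemma pfsum_diff_finite:
  assumes "0 < e" "\<And>k. k \<in> I \<Longrightarrow> e \<le> cmod (z - hpt k)" "finite X" "X \<subseteq> I"
  shows "pfsum r I z - (\<Sum>k\<in>X. r k / (z - hpt k)) = pfsum r (I - X) z"
proof -
  have "(\<lambda>k. r k / (z - hpt k)) summable_on I"
    by (rule Infinite_Sum.abs_summable_summable[OF summable_on_partial_fractions[OF assms(1,2)]])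
  from infsum_Diff[OF this summable_on_subset[OF this assms(4)] assms(4)] show ?thesis
    using assms(3) unfolding pfsum_def by simp
qed

lemma uniform_limit_pfsum:
  assumes "0 < e" "\<And>z k. z \<in> S \<Longrightarrow> k \<in> I \<Longrightarrow> e \<le> cmod (z - hpt k)"
  shows "uniform_limit S (\<lambda>X z. \<Sum>k\<in>X. r k / (z - hpt k)) (pfsum r I) (finite_subsets_at_top I)"
proof (rule uniform_limitI)
  fix d :: real assume "0 < d"
  then have "\<forall>\<^sub>F X in finite_subsets_at_top I. \<bar>\<Sum>\<^sub>\<infinity>k\<in>I - X. norm (r k)\<bar> < d * e"
    using assms(1) by (intro eventually_infsum_tail_less summable_on_norm_residues) simp
  moreover have "\<forall>\<^sub>F X in finite_subsets_at_top I. finite X \<and> X \<subseteq> I"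
    by (simp add: eventually_finite_subsets_at_top_weakI)
  ultimately show "\<forall>\<^sub>F X in finite_subsets_at_top I. \<forall>z\<in>S. dist (\<Sum>k\<in>X. r k / (z - hpt k)) (pfsum r I z) < d"
  proof eventually_elim
    case (elim X)
    show ?case
    proof
      fix z assume "z \<in> S"
      then have "dist (\<Sum>k\<in>X. r k / (z - hpt k)) (pfsum r I z) = cmod (pfsum r (I - X) z)"
        using elim assms by (subst pfsum_diff_finite[symmetric]) (auto simp: dist_norm norm_minus_commute)
      also have "\<dots> \<le> (\<Sum>\<^sub>\<infinity>k\<in>I - X. norm (r k)) / e"
        using \<open>z \<in> S\<close> assms by (intro norm_pfsum_le) auto
      also have "\<dots> < d"
        using elim assms(1) by (simp add: divide_less_eq)
      finally show "dist (\<Sum>k\<in>X. r k / (z - hpt k)) (pfsum r I z) < d" .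
    qed
  qed
qed

lemma holomorphic_on_pfsum:
  assumes S: "open S" and e: "0 < e" "\<And>z k. z \<in> S \<Longrightarrow> k \<in> I \<Longrightarrow> e \<le> cmod (z - hpt k)"
  shows "pfsum r I holomorphic_on S"
  unfolding holomorphic_on_open[OF S]
proof
  fix z0 assume "z0 \<in> S"
  then obtain \<rho> where \<rho>: "0 < \<rho>" "cball z0 \<rho> \<subseteq> S"
    using S open_contains_cball by blast
  have "\<forall>\<^sub>F X in finite_subsets_at_top I. continuous_on (cball z0 \<rho>) (\<lambda>z. \<Sum>k\<in>X. r k / (z - hpt k))
      \<and> (\<lambda>z. \<Sum>k\<in>X. r k / (z - hpt k)) holomorphic_on ball z0 \<rho>"
  proof (rule eventually_finite_subsets_at_top_weakI)
    fix X assume "finite X" "X \<subseteq> I"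
    then have "z - hpt k \<noteq> 0" if "z \<in> cball z0 \<rho>" "k \<in> X" for z k
      using e \<rho>(2) that by force
    then have "(\<lambda>z. \<Sum>k\<in>X. r k / (z - hpt k)) holomorphic_on cball z0 \<rho>"
      by (intro holomorphic_intros) auto
    then show "continuous_on (cball z0 \<rho>) (\<lambda>z. \<Sum>k\<in>X. r k / (z - hpt k))
      \<and> (\<lambda>z. \<Sum>k\<in>X. r k / (z - hpt k)) holomorphic_on ball z0 \<rho>"
      using holomorphic_on_imp_continuous_on holomorphic_on_subset ball_subset_cball by blast
  qed
  moreover have "uniform_limit (cball z0 \<rho>) (\<lambda>X z. \<Sum>k\<in>X. r k / (z - hpt k)) (pfsum r I) (finite_subsets_at_top I)"
    using \<rho>(2) e by (intro uniform_limit_pfsum) auto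
  ultimately obtain "pfsum r I holomorphic_on ball z0 \<rho>"
    by (rule holomorphic_uniform_limit) simp
  then show "\<exists>f'. (pfsum r I has_field_derivative f') (at z0)"
    using holomorphic_on_imp_differentiable_at[of _ "ball z0 \<rho>" z0] \<rho>(1)
    by (auto simp: field_differentiable_def)
qed

lemma holomorphic_on_pfsum_off_halfintC: "pfsum r UNIV holomorphic_on (- halfintC)"
  unfolding holomorphic_on_open[OF closed_halfintC[unfolded closed_def]]
proof
  fix z0 assume "z0 \<in> - halfintC"
  then obtain e where e: "0 < e" "\<And>z k. z \<in> ball z0 e \<Longrightarrow> e \<le> cmod (z - hpt k)"
    using halfintC_separated_ball by blast
  have "pfsum r UNIV holomorphic_on ball z0 e"
    using e by (intro holomorphic_on_pfsum[of _ e]) auto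
  then show "\<exists>f'. (pfsum r UNIV has_field_derivative f') (at z0)"
    using holomorphic_on_imp_differentiable_at[of _ "ball z0 e" z0] e(1)
    by (auto simp: field_differentiable_def)
qed

lemma holomorphic_on_pfsum_punctured: "pfsum r (- {m}) holomorphic_on ball (hpt m) (1/2)"
proof (rule holomorphic_on_pfsum[of _ "1/2"])
  fix z k assume "z \<in> ball (hpt m) (1/2)" "k \<in> - {m}"
  then show "1/2 \<le> cmod (z - hpt k)"
    by (intro norm_diff_hpt_near) auto
qed auto

lemma isCont_pfsum_punctured: "isCont (pfsum r (- {m})) (hpt m)"
  using holomorphic_on_imp_differentiable_at[OF holomorphic_on_pfsum_punctured]
  by (auto intro: field_differentiable_imp_continuous_at)

lemma pfsum_split:
  assumes "z \<in> ball (hpt m) (1/2)"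
  shows "pfsum r UNIV z = r m / (z - hpt m) + pfsum r (- {m}) z"
proof -
  have "(\<lambda>k. norm (r k / (z - hpt k))) summable_on (- {m})"
  proof (rule summable_on_partial_fractions[of "1/2"])
    fix k assume "k \<in> - {m}"
    then show "1/2 \<le> cmod (z - hpt k)"
      using assms by (intro norm_diff_hpt_near) auto
  qed simp
  then have "(\<lambda>k. r k / (z - hpt k)) summable_on (- {m})"
    by (rule Infinite_Sum.abs_summable_summable)
  then have "pfsum r (insert m (- {m})) z = r m / (z - hpt m) + pfsum r (- {m}) z"
    unfolding pfsum_def by (rule infsum_insert) simp
  moreover have "insert m (- {m}) = UNIV"
    by auto
  ultimately show ?thesis
    by simp
qed

lemma pfsum_residue: "((\<lambda>z. (z - hpt m) * pfsum r UNIV z) \<longlongrightarrow> r m) (at (hpt m))"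
proof -
  have "((\<lambda>z. r m + (z - hpt m) * pfsum r (- {m}) z) \<longlongrightarrow> r m + (hpt m - hpt m) * pfsum r (- {m}) (hpt m)) (at (hpt m))"
    using isCont_pfsum_punctured[unfolded isCont_def] by (intro tendsto_intros)
  moreover have "\<forall>\<^sub>F z in at (hpt m). r m + (z - hpt m) * pfsum r (- {m}) z = (z - hpt m) * pfsum r UNIV z"
    using eventually_at_ball'[of "1/2::real" "hpt m" UNIV]
    by (rule eventually_mono) (auto simp: pfsum_split field_simps)
  ultimately show ?thesis
    using tendsto_cong by fastforce
qed

lemma pfsum_small_on_circles:
  assumes e: "0 < e"
  shows "\<forall>\<^sub>F n in sequentially. \<forall>z. cmod z = real n \<longrightarrow> cmod (pfsum r UNIV z) \<le> e"
proof -
  have "\<forall>\<^sub>F X in finite_subsets_at_top UNIV. \<bar>\<Sum>\<^sub>\<infinity>k\<in>UNIV - X. norm (r k)\<bar> < e/4 \<and> finite X"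
    using e by (intro eventually_conj eventually_infsum_tail_less[OF r]) auto
  then obtain X where X: "\<bar>\<Sum>\<^sub>\<infinity>k\<in>UNIV - X. norm (r k)\<bar> < e/4" "finite X"
    using eventually_happens[of _ "finite_subsets_at_top UNIV"] by auto
  define R where "R = (\<Sum>k\<in>X. norm (r k)) + 1"
  have R: "0 < R"
    unfolding R_def by (simp add: sum_nonneg add_nonneg_pos)
  define M where "M = (\<Sum>k\<in>X. \<bar>of_int k\<bar>::real)"
  have M: "\<bar>of_int k\<bar> \<le> M" if "k \<in> X" for k
    unfolding M_def using X(2) that by (intro member_le_sum) auto
  have bound: "cmod (pfsum r UNIV z) \<le> e" if n: "M + 1 + 4 * R / e \<le> real n" and z: "cmod z = real n" for n z
  proof -
    text \<open>The finitely many large residues are far from the circle, the rest have small total mass.\<close>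
    have far: "4 * R / e \<le> cmod (z - hpt k)" if "k \<in> X" for k
      using norm_diff_hpt_on_circle(2)[OF z, of k] M[OF that] n by linarith
    have "cmod (\<Sum>k\<in>X. r k / (z - hpt k)) \<le> (\<Sum>k\<in>X. norm (r k)) / (4 * R / e)"
      using R e far by (intro norm_sum_partial_fractions_le) auto
    also have "\<dots> \<le> R / (4 * R / e)"
      using R e by (intro divide_right_mono) (auto simp: R_def)
    also have "\<dots> = e / 4"
      using R e by (simp add: field_simps)
    finally have head: "cmod (\<Sum>k\<in>X. r k / (z - hpt k)) \<le> e / 4" .
    have "cmod (pfsum r (UNIV - X) z) \<le> (\<Sum>\<^sub>\<infinity>k\<in>UNIV - X. norm (r k)) / (1/2)"
      using norm_diff_hpt_on_circle(1)[OF z] by (intro norm_pfsum_le) auto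
    then have tail: "cmod (pfsum r (UNIV - X) z) \<le> e / 2"
      using X(1) by simp
    have "pfsum r UNIV z = (\<Sum>k\<in>X. r k / (z - hpt k)) + pfsum r (UNIV - X) z"
      using pfsum_diff_finite[of "1/2" UNIV z X] norm_diff_hpt_on_circle(1)[OF z] X(2)
      by (simp add: algebra_simps)
    then have "cmod (pfsum r UNIV z) \<le> cmod (\<Sum>k\<in>X. r k / (z - hpt k)) + cmod (pfsum r (UNIV - X) z)"
      by (simp add: norm_triangle_ineq)
    then show ?thesis
      using head tail e by linarith
  qed
  show ?thesis
    unfolding eventually_sequentially
  proof (rule exI[of _ "nat \<lceil>M + 1 + 4 * R / e\<rceil>"], intro allI impI)
    fix n z assume n: "nat \<lceil>M + 1 + 4 * R / e\<rceil> \<le> n" and z: "cmod z = real n"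
    from n have "M + 1 + 4 * R / e \<le> real n"
      by (simp only: nat_ceiling_le_eq)
    then show "cmod (pfsum r UNIV z) \<le> e"
      using z by (rule bound)
  qed
qed

end

lemma pfsum_linear:
  assumes "0 < e" "\<And>k. k \<in> I \<Longrightarrow> e \<le> cmod (z - hpt k)"
    and "(\<lambda>k. norm (r1 k)) summable_on UNIV" "(\<lambda>k. norm (r2 k)) summable_on UNIV"
  shows "pfsum (\<lambda>k. c1 * r1 k + c2 * r2 k) I z = c1 * pfsum r1 I z + c2 * pfsum r2 I z"
proof -
  have s1: "(\<lambda>k. r1 k / (z - hpt k)) summable_on I"
    by (rule Infinite_Sum.abs_summable_summable[OF summable_on_partial_fractions[OF assms(3) assms(1,2)]])
  have s2: "(\<lambda>k. r2 k / (z - hpt k)) summable_on I"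
    by (rule Infinite_Sum.abs_summable_summable[OF summable_on_partial_fractions[OF assms(4) assms(1,2)]])
  have "pfsum (\<lambda>k. c1 * r1 k + c2 * r2 k) I z
      = (\<Sum>\<^sub>\<infinity>k\<in>I. c1 * (r1 k / (z - hpt k)) + c2 * (r2 k / (z - hpt k)))"
    unfolding pfsum_def by (rule infsum_cong) (simp add: add_divide_distrib)
  also have "\<dots> = (\<Sum>\<^sub>\<infinity>k\<in>I. c1 * (r1 k / (z - hpt k))) + (\<Sum>\<^sub>\<infinity>k\<in>I. c2 * (r2 k / (z - hpt k)))"
    by (rule infsum_add) (intro summable_on_cmult_right s1 s2)+
  also have "(\<Sum>\<^sub>\<infinity>k\<in>I. c1 * (r1 k / (z - hpt k))) = c1 * pfsum r1 I z"
    unfolding pfsum_def by (rule infsum_cmult_right) (rule s1)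
  also have "(\<Sum>\<^sub>\<infinity>k\<in>I. c2 * (r2 k / (z - hpt k))) = c2 * pfsum r2 I z"
    unfolding pfsum_def by (rule infsum_cmult_right) (rule s2)
  finally show ?thesis .
qed

section \<open>The linear system for the residues\<close>

lemma infsum_diff:
  fixes f g :: "'a \<Rightarrow> real"
  assumes "f summable_on A" "g summable_on A"
  shows "(\<Sum>\<^sub>\<infinity>k\<in>A. f k - g k) = (\<Sum>\<^sub>\<infinity>k\<in>A. f k) - (\<Sum>\<^sub>\<infinity>k\<in>A. g k)"
  using infsum_add[OF assms(1) summable_on_uminus[THEN iffD2, OF assms(2)]] by (simp add: infsum_uminus)

lemma nonpos_if_le_geometric:
  fixes c K a :: real
  assumes "0 \<le> a" "a < 1" "\<And>n. c \<le> K * a ^ n"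
  shows "c \<le> 0"
proof -
  have "(\<lambda>n. K * a ^ n) \<longlonglongrightarrow> K * 0"
    using assms(1,2) by (intro tendsto_mult tendsto_const LIMSEQ_power_zero) auto
  then show ?thesis
    using assms(3) by (intro LIMSEQ_le_const[of "\<lambda>n. K * a ^ n"]) auto
qed

text \<open>Banach's fixed point theorem for the supremum distance, proved directly because \<open>int\<close> is
  not a \<open>metric_space\<close> instance, which rules out the library space \<open>int \<Rightarrow>\<^sub>C real\<close>.\<close>
lemma bounded_contraction_fixpoint:
  fixes \<Phi> :: "('a \<Rightarrow> real) \<Rightarrow> 'a \<Rightarrow> real"
  assumes a: "0 \<le> a" "a < 1" and B: "0 \<le> B"
    and into: "\<And>u m. (\<And>k. \<bar>u k\<bar> \<le> B) \<Longrightarrow> \<bar>\<Phi> u m\<bar> \<le> B"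
    and lipschitz: "\<And>u v D m. (\<And>k. \<bar>u k\<bar> \<le> B) \<Longrightarrow> (\<And>k. \<bar>v k\<bar> \<le> B) \<Longrightarrow>
      (\<And>k. \<bar>u k - v k\<bar> \<le> D) \<Longrightarrow> \<bar>\<Phi> u m - \<Phi> v m\<bar> \<le> a * D"
  obtains x where "\<And>m. \<bar>x m\<bar> \<le> B" "\<And>m. \<Phi> x m = x m"
proof -
  define xs where "xs n = (\<Phi> ^^ n) (\<lambda>_. 0)" for n
  have xs_Suc: "xs (Suc n) = \<Phi> (xs n)" for n
    by (simp add: xs_def)
  have bounded: "\<bar>xs n m\<bar> \<le> B" for n m
    by (induction n arbitrary: m) (auto simp: xs_def B intro: into)
  have step: "\<bar>xs (Suc n) m - xs n m\<bar> \<le> B * a ^ n" for n m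
  proof (induction n arbitrary: m)
    case 0
    then show ?case
      using bounded[of 1 m] by (simp add: xs_def)
  next
    case (Suc n)
    have "\<bar>\<Phi> (xs (Suc n)) m - \<Phi> (xs n) m\<bar> \<le> a * (B * a ^ n)"
      by (rule lipschitz[OF bounded bounded Suc.IH])
    then show ?case
      by (simp add: xs_Suc[of "Suc n"] xs_Suc[of n] mult_ac)
  qed
  define C where "C = B / (1 - a)"
  define x where "x m = (\<Sum>j. xs (Suc j) m - xs j m)" for m
  have summable: "summable (\<lambda>j. xs (Suc j) m - xs j m)" for m
  proof (rule summable_comparison_test)
    show "\<exists>N. \<forall>n\<ge>N. norm (xs (Suc n) m - xs n m) \<le> B * a ^ n"
      using step by auto
    show "summable (\<lambda>n. B * a ^ n)"
      using a by (intro summable_mult summable_geometric) auto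
  qed
  have tail: "\<bar>x m - xs n m\<bar> \<le> C * a ^ n" for m n
  proof -
    have geom: "(\<lambda>j. B * a ^ n * a ^ j) sums (B * a ^ n * (1 / (1 - a)))"
      using a by (intro sums_mult geometric_sums) auto
    have dom: "\<bar>xs (Suc (j + n)) m - xs (j + n) m\<bar> \<le> B * a ^ n * a ^ j" for j
      using step[of "j + n" m] by (simp add: power_add mult_ac)
    have "x m = (\<Sum>j. xs (Suc (j + n)) m - xs (j + n) m) + (\<Sum>j<n. xs (Suc j) m - xs j m)"
      unfolding x_def by (rule suminf_split_initial_segment[OF summable])
    moreover have "(\<Sum>j<n. xs (Suc j) m - xs j m) = xs n m"
      using sum_lessThan_telescope[of "\<lambda>j. xs j m" n] by (simp add: xs_def)
    moreover have "\<bar>\<Sum>j. xs (Suc (j + n)) m - xs (j + n) m\<bar> \<le> B * a ^ n * (1 / (1 - a))"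
      by (rule sums_dominated(2)[OF dom geom])
    ultimately show ?thesis
      by (simp add: C_def mult_ac)
  qed
  have C: "0 \<le> C"
    unfolding C_def using a B by simp
  have x_bounded: "\<bar>x m\<bar> \<le> B" for m
  proof -
    have "\<bar>x m\<bar> - B \<le> C * a ^ n" for n
      using tail[of m n] bounded[of n m] by linarith
    then show ?thesis
      using nonpos_if_le_geometric[OF a] by fastforce
  qed
  have "\<Phi> x m = x m" for m
  proof -
    have "\<bar>\<Phi> x m - x m\<bar> \<le> (2 * C) * a ^ n" for n
    proof -
      have "\<bar>\<Phi> x m - \<Phi> (xs n) m\<bar> \<le> a * (C * a ^ n)"
        by (rule lipschitz[OF x_bounded bounded tail])
      moreover have "\<bar>x m - \<Phi> (xs n) m\<bar> \<le> a * (C * a ^ n)"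
        using tail[of m "Suc n"] by (simp add: xs_Suc mult_ac)
      moreover have "a * (C * a ^ n) \<le> C * a ^ n"
        using a C by (intro mult_left_le_one_le) auto
      moreover have "\<bar>\<Phi> x m - x m\<bar> \<le> \<bar>\<Phi> x m - \<Phi> (xs n) m\<bar> + \<bar>x m - \<Phi> (xs n) m\<bar>"
        using abs_triangle_ineq4[of "\<Phi> x m - \<Phi> (xs n) m" "x m - \<Phi> (xs n) m"] by simp
      ultimately have "\<bar>\<Phi> x m - x m\<bar> \<le> 2 * (C * a ^ n)"
        by linarith
      then show ?thesis
        by (simp only: mult.assoc)
    qed
    then have "\<bar>\<Phi> x m - x m\<bar> \<le> 0"
      by (rule nonpos_if_le_geometric[OF a])
    then show ?thesis
      by simp
  qed
  then show ?thesis
    using that x_bounded by blast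
qed

locale RH_setup =
  fixes \<sigma> :: "real \<Rightarrow> real" and s \<theta> :: real
  assumes \<sigma>_range: "\<And>m::int. 0 \<le> \<sigma> (of_int m + 1/2 - s - 1/2) \<and> \<sigma> (of_int m + 1/2 - s - 1/2) \<le> 1"
    and \<sigma>_negative: "\<And>m::int. m < 0 \<Longrightarrow> \<sigma> (of_int m + 1/2 - s - 1/2) \<le> \<theta>"
    and \<theta>: "0 \<le> \<theta>" "\<theta> < 1"
begin

definition tau :: "int \<Rightarrow> real" where
  "tau m = \<sigma> (of_int m + 1/2 - s - 1/2)"

definition gap :: real where
  "gap = (1 - \<theta>) / 2"

definition L0 :: real where
  "L0 = min (1/2) (min (2 * gap / KBe_const) (gap / (54 * half_pow_sum)))"

definition coef :: "real \<Rightarrow> int \<Rightarrow> real" where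
  "coef L m = tau m / (1 - Ms \<sigma> s L m)"

text \<open>\<open>kernel L m k = \<langle>g(a\<^sub>k), f(a\<^sub>m)\<rangle> / (m - k)\<close>, and \<open>sys_map\<close> is the right-hand side of the
  linear system for the residues.\<close>
definition kernel :: "real \<Rightarrow> int \<Rightarrow> int \<Rightarrow> real" where
  "kernel L m k = (if k = m then 0 else L * (J L (k + 1) * J L m - J L k * J L (m + 1)) / of_int (m - k))"

definition sys_map :: "real \<Rightarrow> (int \<Rightarrow> real) \<Rightarrow> (int \<Rightarrow> real) \<Rightarrow> int \<Rightarrow> real" where
  "sys_map L f u m = coef L m * (f m + (\<Sum>\<^sub>\<infinity>k. kernel L m k * u k))"

lemma tau_nonneg: "0 \<le> tau m" and tau_le_1: "tau m \<le> 1"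
  using \<sigma>_range[of m] unfolding tau_def by auto

lemma gap_pos: "0 < gap" and gap_le_half: "gap \<le> 1/2"
  unfolding gap_def using \<theta> by auto

lemma KBe_const_pos: "0 < KBe_const"
  unfolding KBe_const_def using half_pow_sum_pos by simp

lemma L0_pos: "0 < L0"
  unfolding L0_def using gap_pos KBe_const_pos half_pow_sum_pos by auto

lemma L0_le_half: "L0 \<le> 1/2"
  unfolding L0_def by simp

lemma Ms_eq: "Ms \<sigma> s L m = tau m * KBe L m"
  unfolding Ms_def tau_def ..

text \<open>For \<open>m < 0\<close> the factor \<open>K\<^sup>B\<^sup>e(a, a)\<close> is close to \<open>1\<close>, not small; this is where \<open>\<theta> < 1\<close> is needed.\<close>
lemma gap_le_one_minus_Ms:
  assumes L: "0 \<le> L" "L \<le> L0"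
  shows "gap \<le> 1 - Ms \<sigma> s L m"
proof -
  have L2: "L \<le> 1/2"
    using L L0_le_half by linarith
  have "KBe_const * L \<le> 2 * gap"
    using L KBe_const_pos unfolding L0_def by (simp add: field_simps)
  moreover have "KBe_const * L\<^sup>2 \<le> KBe_const * L * (1/2)"
  proof -
    have "L * L \<le> L * (1/2)"
      using L L2 by (intro mult_left_mono) auto
    then show ?thesis
      using KBe_const_pos by (simp add: power2_eq_square mult.assoc mult_left_mono)
  qed
  ultimately have small: "KBe_const * L\<^sup>2 \<le> gap"
    by linarith
  have KBe: "0 \<le> KBe L m"
    by (rule KBe_nonneg[OF L(1) L2])
  show ?thesis
  proof (cases "0 \<le> m")
    case True
    have "Ms \<sigma> s L m \<le> KBe L m"
      unfolding Ms_eq using tau_le_1 KBe by (simp add: mult_left_le_one_le tau_nonneg)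
    also have "\<dots> \<le> KBe_const * L\<^sup>2"
      by (rule KBe_le_of_nonneg[OF L(1) L2 True])
    finally show ?thesis
      using small gap_le_half by linarith
  next
    case False
    then have "tau m \<le> \<theta>"
      using \<sigma>_negative[of m] unfolding tau_def by simp
    then have "Ms \<sigma> s L m \<le> \<theta> * (1 + KBe_const * L\<^sup>2)"
      unfolding Ms_eq using KBe KBe_le[OF L(1) L2, of m] \<theta>(1)
      by (intro mult_mono) auto
    also have "\<dots> \<le> \<theta> + KBe_const * L\<^sup>2"
      using \<theta> KBe_const_pos by (simp add: distrib_left mult_left_le_one_le)
    moreover have "2 * gap = 1 - \<theta>"
      unfolding gap_def by simp
    ultimately show ?thesis
      using small by linarith
  qed
qed

lemma coef_nonneg: "0 \<le> L \<Longrightarrow> L \<le> L0 \<Longrightarrow> 0 \<le> coef L m"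
  unfolding coef_def using gap_le_one_minus_Ms[of L m] gap_pos tau_nonneg by simp

lemma coef_le:
  assumes "0 \<le> L" "L \<le> L0"
  shows "coef L m \<le> 1 / gap"
proof -
  have "gap \<le> 1 - Ms \<sigma> s L m"
    by (rule gap_le_one_minus_Ms[OF assms])
  then show ?thesis
    unfolding coef_def using tau_nonneg tau_le_1 gap_pos by (simp add: frac_le)
qed

lemma abs_kernel_le:
  assumes "0 \<le> L"
  shows "\<bar>kernel L m k\<bar> \<le> L * (\<bar>J L (k + 1)\<bar> * \<bar>J L m\<bar> + \<bar>J L k\<bar> * \<bar>J L (m + 1)\<bar>)"
proof (cases "k = m")
  case False
  then have "1 \<le> \<bar>of_int (m - k)::real\<bar>"
    by linarith
  have "\<bar>kernel L m k\<bar> = L * \<bar>J L (k + 1) * J L m - J L k * J L (m + 1)\<bar> / \<bar>of_int (m - k)\<bar>"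
    unfolding kernel_def using False assms by (simp add: abs_mult abs_divide)
  also have "\<dots> \<le> L * \<bar>J L (k + 1) * J L m - J L k * J L (m + 1)\<bar> / 1"
    using \<open>1 \<le> \<bar>of_int (m - k)::real\<bar>\<close> assms by (intro divide_left_mono) auto
  also have "\<dots> = L * \<bar>J L (k + 1) * J L m - J L k * J L (m + 1)\<bar>"
    by simp
  also have "\<dots> \<le> L * (\<bar>J L (k + 1)\<bar> * \<bar>J L m\<bar> + \<bar>J L k\<bar> * \<bar>J L (m + 1)\<bar>)"
    using assms by (intro mult_left_mono) (auto simp: abs_mult[symmetric] abs_triangle_ineq4)
  finally show ?thesis .
qed (use assms in \<open>simp add: kernel_def\<close>)

lemma abs_kernel_le_half_pow:
  assumes L: "0 \<le> L" "L \<le> 1/2"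
  shows "\<bar>kernel L m k\<bar> \<le> 27 * L * half_pow k"
proof -
  have "\<bar>J L (k + 1)\<bar> * \<bar>J L m\<bar> \<le> (6 * half_pow k) * 3"
    using abs_J_succ_le_half_pow[OF L, of k] abs_J_le_3[of L m] L by (intro mult_mono) auto
  moreover have "\<bar>J L k\<bar> * \<bar>J L (m + 1)\<bar> \<le> (3 * half_pow k) * 3"
    using abs_J_le_half_pow[OF L, of k] abs_J_le_3[of L "m + 1"] L by (intro mult_mono) auto
  ultimately have "L * (\<bar>J L (k + 1)\<bar> * \<bar>J L m\<bar> + \<bar>J L k\<bar> * \<bar>J L (m + 1)\<bar>) \<le> L * (27 * half_pow k)"
    using L by (intro mult_left_mono) auto
  then show ?thesis
    using abs_kernel_le[OF L(1), of m k] by (simp add: mult.assoc)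
qed

lemma abs_kernel_le_J:
  assumes L: "0 \<le> L" "L \<le> 1/2"
  shows "\<bar>kernel L m k\<bar> \<le> 6 * L * (\<bar>J L m\<bar> + \<bar>J L (m + 1)\<bar>) * half_pow k"
proof -
  have "\<bar>J L (k + 1)\<bar> * \<bar>J L m\<bar> \<le> (6 * half_pow k) * \<bar>J L m\<bar>"
    using abs_J_succ_le_half_pow[OF L, of k] by (intro mult_right_mono) auto
  moreover have "\<bar>J L k\<bar> * \<bar>J L (m + 1)\<bar> \<le> (6 * half_pow k) * \<bar>J L (m + 1)\<bar>"
    using abs_J_le_half_pow[OF L, of k] half_pow_pos[of k] by (intro mult_right_mono) auto
  ultimately have "L * (\<bar>J L (k + 1)\<bar> * \<bar>J L m\<bar> + \<bar>J L k\<bar> * \<bar>J L (m + 1)\<bar>)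
      \<le> L * (6 * half_pow k * \<bar>J L m\<bar> + 6 * half_pow k * \<bar>J L (m + 1)\<bar>)"
    using L by (intro mult_left_mono) auto
  then show ?thesis
    using abs_kernel_le[OF L(1), of m k] by (simp add: algebra_simps)
qed

lemma abs_kernel_le_power:
  assumes L: "0 \<le> L" "L \<le> 1/2"
  shows "\<bar>kernel L m k\<bar> \<le> 18 * L ^ nat \<bar>k\<bar>"
proof -
  have L1: "L \<le> 1"
    using L by simp
  have "(L * \<bar>J L (k + 1)\<bar>) * \<bar>J L m\<bar> \<le> (3 * L ^ nat \<bar>k\<bar>) * 3"
    by (rule mult_mono[OF L_abs_J_succ_le[OF L(1) L1] abs_J_le_3[OF L(1) L1]]) (use L in auto)
  moreover have "L * (\<bar>J L k\<bar> * \<bar>J L (m + 1)\<bar>) \<le> 1 * ((3 * L ^ nat \<bar>k\<bar>) * 3)"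
    using abs_J_le[OF L(1) L1, of k] abs_J_le_3[OF L(1) L1, of "m + 1"] L L1
    by (intro mult_mono) auto
  ultimately show ?thesis
    using abs_kernel_le[OF L(1), of m k] by (simp add: algebra_simps)
qed

lemma kernel_mult_bounded:
  assumes L: "0 \<le> L" "L \<le> 1/2" and u: "\<bar>u k\<bar> \<le> U"
  shows "\<bar>kernel L m k * u k\<bar> \<le> (27 * L * U) * half_pow k"
proof -
  have "\<bar>kernel L m k\<bar> * \<bar>u k\<bar> \<le> (27 * L * half_pow k) * U"
    using abs_kernel_le_half_pow[OF L] u L half_pow_pos[of k] by (intro mult_mono) auto
  then show ?thesis
    by (simp add: abs_mult mult_ac)
qed

lemma summable_on_kernel_mult:
  assumes "0 \<le> L" "L \<le> 1/2" "\<And>k. \<bar>u k\<bar> \<le> U"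
  shows "(\<lambda>k. kernel L m k * u k) summable_on A"
proof (rule summable_on_half_pow_dominated)
  fix k
  show "\<bar>kernel L m k * u k\<bar> \<le> 27 * L * U * half_pow k"
    by (rule kernel_mult_bounded[OF assms(1,2)]) (rule assms(3))
qed

lemma abs_infsum_kernel_mult_le:
  assumes L: "0 \<le> L" "L \<le> 1/2" and u: "\<And>k. \<bar>u k\<bar> \<le> U"
  shows "\<bar>\<Sum>\<^sub>\<infinity>k\<in>A. kernel L m k * u k\<bar> \<le> 27 * L * U * half_pow_sum"
proof -
  have "0 \<le> U"
    using u[of 0] by linarith
  then have "0 \<le> 27 * L * U"
    using L by simp
  then show ?thesis
  proof (rule abs_infsum_le_half_pow_dominated)
    fix k
    show "\<bar>kernel L m k * u k\<bar> \<le> 27 * L * U * half_pow k"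
      by (rule kernel_mult_bounded[OF L]) (rule u)
  qed
qed

definition contraction_const :: "real \<Rightarrow> real" where
  "contraction_const L = 27 * half_pow_sum * L / gap"

lemma contraction_const_le_half:
  assumes "0 \<le> L" "L \<le> L0"
  shows "0 \<le> contraction_const L" "contraction_const L \<le> 1/2"
proof -
  show "0 \<le> contraction_const L"
    unfolding contraction_const_def using assms gap_pos half_pow_sum_pos by simp
  have "L \<le> gap / (54 * half_pow_sum)"
    using assms unfolding L0_def by linarith
  then show "contraction_const L \<le> 1/2"
    unfolding contraction_const_def using gap_pos half_pow_sum_pos by (simp add: field_simps)
qed

lemma abs_sys_map_le:
  assumes L: "0 \<le> L" "L \<le> L0" and f: "\<And>m. \<bar>f m\<bar> \<le> B" and u: "\<And>k. \<bar>u k\<bar> \<le> U"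
  shows "\<bar>sys_map L f u m\<bar> \<le> B / gap + contraction_const L * U"
proof -
  have L2: "L \<le> 1/2"
    using L L0_le_half by linarith
  have "\<bar>\<Sum>\<^sub>\<infinity>k. kernel L m k * u k\<bar> \<le> 27 * L * U * half_pow_sum"
    by (rule abs_infsum_kernel_mult_le[OF L(1) L2]) (rule u)
  then have "\<bar>f m + (\<Sum>\<^sub>\<infinity>k. kernel L m k * u k)\<bar> \<le> B + 27 * L * U * half_pow_sum"
    using f[of m] by linarith
  then have "\<bar>sys_map L f u m\<bar> \<le> 1 / gap * (B + 27 * L * U * half_pow_sum)"
    unfolding sys_map_def abs_mult using coef_nonneg[OF L] coef_le[OF L] less_imp_le[OF gap_pos]
    by (intro mult_mono) auto
  also have "1 / gap * (B + 27 * L * U * half_pow_sum) = B / gap + contraction_const L * U"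
    unfolding contraction_const_def by (simp add: add_divide_distrib mult_ac)
  finally show ?thesis .
qed

lemma sys_map_lipschitz:
  assumes L: "0 \<le> L" "L \<le> L0" and u: "\<And>k. \<bar>u k\<bar> \<le> U" and v: "\<And>k. \<bar>v k\<bar> \<le> V"
    and d: "\<And>k. \<bar>u k - v k\<bar> \<le> D"
  shows "\<bar>sys_map L f u m - sys_map L f v m\<bar> \<le> contraction_const L * D"
proof -
  have L2: "L \<le> 1/2"
    using L L0_le_half by linarith
  have "(\<Sum>\<^sub>\<infinity>k. kernel L m k * u k) - (\<Sum>\<^sub>\<infinity>k. kernel L m k * v k) = (\<Sum>\<^sub>\<infinity>k. kernel L m k * (u k - v k))"
    using infsum_diff[OF summable_on_kernel_mult[OF L(1) L2 u] summable_on_kernel_mult[OF L(1) L2 v]]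
    by (simp add: right_diff_distrib)
  then have eq: "sys_map L f u m - sys_map L f v m = coef L m * (\<Sum>\<^sub>\<infinity>k. kernel L m k * (u k - v k))"
    unfolding sys_map_def by (simp add: algebra_simps)
  have "\<bar>\<Sum>\<^sub>\<infinity>k. kernel L m k * (u k - v k)\<bar> \<le> 27 * L * D * half_pow_sum"
    by (rule abs_infsum_kernel_mult_le[OF L(1) L2]) (rule d)
  then have "\<bar>coef L m * (\<Sum>\<^sub>\<infinity>k. kernel L m k * (u k - v k))\<bar> \<le> 1 / gap * (27 * L * D * half_pow_sum)"
    unfolding abs_mult using coef_nonneg[OF L, of m] coef_le[OF L, of m] less_imp_le[OF gap_pos]
    by (intro mult_mono) auto
  then show ?thesis
    unfolding eq contraction_const_def by (simp add: field_simps)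
qed

lemma sys_map_fixpoint:
  assumes L: "0 \<le> L" "L \<le> L0" and f: "\<And>m. \<bar>f m\<bar> \<le> B"
  obtains x where "\<And>m. \<bar>x m\<bar> \<le> 2 * B / gap" "\<And>m. sys_map L f x m = x m"
proof (rule bounded_contraction_fixpoint[where \<Phi>="sys_map L f" and a="contraction_const L" and B="2 * B / gap"])
  show "0 \<le> contraction_const L" "contraction_const L < 1"
    using contraction_const_le_half[OF L] by auto
  show B: "0 \<le> 2 * B / gap"
    using f[of 0] gap_pos by simp
  show "\<bar>sys_map L f u m\<bar> \<le> 2 * B / gap" if "\<And>k. \<bar>u k\<bar> \<le> 2 * B / gap" for u m
  proof -
    have "\<bar>sys_map L f u m\<bar> \<le> B / gap + contraction_const L * (2 * B / gap)"
      by (rule abs_sys_map_le[OF L f that])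
    also have "\<dots> \<le> B / gap + 1/2 * (2 * B / gap)"
      using contraction_const_le_half[OF L] B by (intro add_left_mono mult_right_mono) auto
    finally show ?thesis
      by simp
  qed
  show "\<bar>sys_map L f u m - sys_map L f v m\<bar> \<le> contraction_const L * D"
    if "\<And>k. \<bar>u k\<bar> \<le> 2 * B / gap" "\<And>k. \<bar>v k\<bar> \<le> 2 * B / gap" "\<And>k. \<bar>u k - v k\<bar> \<le> D" for u v D m
    by (rule sys_map_lipschitz[OF L that])
qed (use that in blast)

end

section \<open>Solution of the Riemann-Hilbert problem\<close>

lemma norm_le_sum_entries: "norm (M :: 'a::real_normed_vector ^ 'n ^ 'm) \<le> (\<Sum>i\<in>UNIV. \<Sum>j\<in>UNIV. norm (M $ i $ j))"
proof -
  have "norm M \<le> (\<Sum>i\<in>UNIV. norm (M $ i))"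
    unfolding norm_vec_def by (rule L2_set_le_sum) simp
  also have "\<dots> \<le> (\<Sum>i\<in>UNIV. \<Sum>j\<in>UNIV. norm (M $ i $ j))"
    unfolding norm_vec_def by (intro sum_mono L2_set_le_sum) simp
  finally show ?thesis .
qed

lemma mat_1_entry: "(mat 1 :: 'a::zero_neq_one ^ 'n ^ 'n) $ i $ j = (if i = j then 1 else 0)"
  by (simp add: mat_def)

lemma infsum_of_real:
  fixes g :: "'a \<Rightarrow> real"
  assumes "g summable_on A"
  shows "(\<Sum>\<^sub>\<infinity>k\<in>A. complex_of_real (g k)) = complex_of_real (\<Sum>\<^sub>\<infinity>k\<in>A. g k)"
  using has_sum_bounded_linear[OF bounded_linear_of_real has_sum_infsum[OF assms]] by (rule infsumI)

context RH_setup
begin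

text \<open>The vectors \<open>f(a)\<close> and \<open>g(a)\<close> without their common factor \<open>\<surd>\<sigma>(a - s - 1/2)\<close>,
  which \<open>coef\<close> absorbs.\<close>
definition fvec' :: "real \<Rightarrow> 2 \<Rightarrow> int \<Rightarrow> real" where
  "fvec' L i m = (if i = 1 then J L m else L * J L (m + 1))"

definition gvec' :: "real \<Rightarrow> 2 \<Rightarrow> int \<Rightarrow> real" where
  "gvec' L j m = (if j = 1 then L * J L (m + 1) else - J L m)"

definition xsol :: "real \<Rightarrow> 2 \<Rightarrow> int \<Rightarrow> real" where
  "xsol L i = (SOME x. (\<forall>m. \<bar>x m\<bar> \<le> 6 / gap) \<and> (\<forall>m. sys_map L (fvec' L i) x m = x m))"

definition residue :: "real \<Rightarrow> 2 \<Rightarrow> 2 \<Rightarrow> int \<Rightarrow> complex" where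
  "residue L i j k = complex_of_real (xsol L i k * gvec' L j k)"

definition Ysol :: "real \<Rightarrow> complex \<Rightarrow> complex ^ 2 ^ 2" where
  "Ysol L z = mat 1 + (\<chi> i j. pfsum (residue L i j) UNIV z)"

lemma Ysol_entry: "Ysol L z $ i $ j = (if i = j then 1 else 0) + pfsum (residue L i j) UNIV z"
  unfolding Ysol_def by (simp add: mat_1_entry)

lemma abs_fvec'_le: "0 \<le> L \<Longrightarrow> L \<le> 1 \<Longrightarrow> \<bar>fvec' L i m\<bar> \<le> 3"
  unfolding fvec'_def using abs_J_le_3[of L] mult_mono[of L 1 "\<bar>J L (m + 1)\<bar>" 3]
  by (auto simp: abs_mult)

lemma
  assumes "0 \<le> L" "L \<le> L0"
  shows xsol_bounded: "\<bar>xsol L i m\<bar> \<le> 6 / gap"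
    and xsol_fixpoint: "sys_map L (fvec' L i) (xsol L i) m = xsol L i m"
proof -
  have "\<bar>fvec' L i m\<bar> \<le> 3" for m
    using assms L0_le_half by (intro abs_fvec'_le) auto
  then obtain x where "\<And>m. \<bar>x m\<bar> \<le> 2 * 3 / gap" "\<And>m. sys_map L (fvec' L i) x m = x m"
    using sys_map_fixpoint[OF assms] by metis
  then have "\<exists>x. (\<forall>m. \<bar>x m\<bar> \<le> 6 / gap) \<and> (\<forall>m. sys_map L (fvec' L i) x m = x m)"
    by auto
  from someI_ex[OF this] show "\<bar>xsol L i m\<bar> \<le> 6 / gap" "sys_map L (fvec' L i) (xsol L i) m = xsol L i m"
    unfolding xsol_def by auto
qed

lemma abs_gvec'_le_half_pow: "0 \<le> L \<Longrightarrow> L \<le> 1/2 \<Longrightarrow> \<bar>gvec' L j k\<bar> \<le> 9 * half_pow k"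
  unfolding gvec'_def using abs_J_le_half_pow[of L k] abs_J_succ_le_half_pow[of L k]
    mult_mono[of L 1 "\<bar>J L (k + 1)\<bar>" "6 * half_pow k"] half_pow_pos[of k]
  by (auto simp: abs_mult)

lemma summable_on_norm_residue:
  assumes L: "0 \<le> L" "L \<le> L0"
  shows "(\<lambda>k. norm (residue L i j k)) summable_on A"
proof (rule summable_on_half_pow_dominated)
  fix k
  have "\<bar>xsol L i k\<bar> * \<bar>gvec' L j k\<bar> \<le> 6 / gap * (9 * half_pow k)"
    using xsol_bounded[OF L] abs_gvec'_le_half_pow[of L j k] L L0_le_half less_imp_le[OF gap_pos]
    by (intro mult_mono) auto
  then show "\<bar>norm (residue L i j k)\<bar> \<le> 54 / gap * half_pow k"
    by (simp add: residue_def abs_mult norm_mult)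
qed

lemma WY_entry: "WY \<sigma> s L m $ i $ j = complex_of_real (coef L m * fvec' L i m * gvec' L j m)"
proof -
  have "fvec \<sigma> s L m $ i = sqrt (tau m) * fvec' L i m" "gvec \<sigma> s L m $ j = sqrt (tau m) * gvec' L j m"
    unfolding fvec_def fvec'_def gvec_def gvec'_def tau_def J_def
    using exhaust_2[of i] exhaust_2[of j] by auto
  moreover have "sqrt (tau m) * sqrt (tau m) = tau m"
    using tau_nonneg by simp
  ultimately have "fvec \<sigma> s L m $ i * gvec \<sigma> s L m $ j / (1 - Ms \<sigma> s L m) = coef L m * fvec' L i m * gvec' L j m"
    unfolding coef_def by (simp add: field_simps)
  moreover have "WY \<sigma> s L m $ i $ j
      = complex_of_real (fvec \<sigma> s L m $ i * gvec \<sigma> s L m $ j / (1 - Ms \<sigma> s L m))"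
    unfolding WY_def by (simp only: vec_lambda_beta)
  ultimately show ?thesis
    by simp
qed

lemma holomorphic_on_Ysol:
  assumes "0 \<le> L" "L \<le> L0"
  shows "(\<lambda>z. Ysol L z $ i $ j) holomorphic_on (- halfintC)"
  unfolding Ysol_entry
  by (intro holomorphic_intros holomorphic_on_pfsum_off_halfintC summable_on_norm_residue[OF assms])

lemma Ysol_simple_pole:
  assumes "0 \<le> L" "L \<le> L0"
  shows "((\<lambda>z. (z - hpt m) * Ysol L z $ i $ j) \<longlongrightarrow> residue L i j m) (at (hpt m))"
proof -
  have "((\<lambda>z. (z - hpt m) * (if i = j then 1 else 0) + (z - hpt m) * pfsum (residue L i j) UNIV z)
      \<longlongrightarrow> (hpt m - hpt m) * (if i = j then 1 else 0) + residue L i j m) (at (hpt m))"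
    by (intro tendsto_intros pfsum_residue summable_on_norm_residue[OF assms])
  then show ?thesis
    unfolding Ysol_entry distrib_left by simp
qed

lemma Ysol_normalized:
  assumes L: "0 \<le> L" "L \<le> L0" and \<epsilon>: "0 < \<epsilon>"
  shows "\<forall>\<^sub>F n in sequentially. \<forall>z. cmod z = real n \<longrightarrow> norm (Ysol L z - mat 1) \<le> \<epsilon>"
proof -
  have "\<forall>\<^sub>F n in sequentially. \<forall>z. cmod z = real n \<longrightarrow> cmod (pfsum (residue L i j) UNIV z) \<le> \<epsilon> / 4" for i j
    using \<epsilon> by (intro pfsum_small_on_circles summable_on_norm_residue[OF L]) simp
  then have "\<forall>\<^sub>F n in sequentially. \<forall>i j z. cmod z = real n \<longrightarrow> cmod (pfsum (residue L i j) UNIV z) \<le> \<epsilon> / 4"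
    by (intro eventually_all_finite) auto
  then show ?thesis
  proof (rule eventually_mono, intro allI impI)
    fix n z assume small: "\<forall>i j z. cmod z = real n \<longrightarrow> cmod (pfsum (residue L i j) UNIV z) \<le> \<epsilon> / 4"
      and z: "cmod z = real n"
    have "norm (Ysol L z - mat 1) \<le> (\<Sum>i\<in>UNIV. \<Sum>j\<in>UNIV. cmod ((Ysol L z - mat 1) $ i $ j))"
      by (rule norm_le_sum_entries)
    also have "\<dots> \<le> (\<Sum>i\<in>(UNIV::2 set). \<Sum>j\<in>(UNIV::2 set). \<epsilon> / 4)"
      using small z by (intro sum_mono) (simp add: Ysol_entry mat_1_entry)
    finally show "norm (Ysol L z - mat 1) \<le> \<epsilon>"
      by simp
  qed
qed

definition pairing :: "real \<Rightarrow> int \<Rightarrow> int \<Rightarrow> real" where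
  "pairing L m k = gvec' L 1 k * fvec' L 1 m + gvec' L 2 k * fvec' L 2 m"

lemma kernel_eq_pairing: "k \<noteq> m \<Longrightarrow> kernel L m k = pairing L m k / of_int (m - k)"
  unfolding kernel_def pairing_def gvec'_def fvec'_def by (simp add: algebra_simps)

lemma pairing_diag: "pairing L m m = 0"
  unfolding pairing_def gvec'_def fvec'_def by simp

definition row_residue :: "real \<Rightarrow> int \<Rightarrow> 2 \<Rightarrow> int \<Rightarrow> complex" where
  "row_residue L m i k = complex_of_real (xsol L i k * pairing L m k)"

lemma row_residue_eq:
  "row_residue L m i k = complex_of_real (fvec' L 1 m) * residue L i 1 k + complex_of_real (fvec' L 2 m) * residue L i 2 k"
  unfolding row_residue_def residue_def pairing_def by (simp add: algebra_simps)

lemma summable_on_norm_row_residue: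
  assumes L: "0 \<le> L" "L \<le> L0"
  shows "(\<lambda>k. norm (row_residue L m i k)) summable_on UNIV"
proof (rule Infinite_Sum.abs_summable_on_comparison_test')
  show "(\<lambda>k. \<bar>fvec' L 1 m\<bar> * norm (residue L i 1 k) + \<bar>fvec' L 2 m\<bar> * norm (residue L i 2 k)) summable_on UNIV"
    by (intro summable_on_add summable_on_cmult_right summable_on_norm_residue[OF L])
  fix k
  show "norm (row_residue L m i k) \<le> \<bar>fvec' L 1 m\<bar> * norm (residue L i 1 k) + \<bar>fvec' L 2 m\<bar> * norm (residue L i 2 k)"
    unfolding row_residue_eq by (rule order_trans[OF norm_triangle_ineq]) (simp add: norm_mult)
qed

text \<open>The \<open>i\<close>-th row of \<open>Y(z)\<close> paired with \<open>f(a\<^sub>m)\<close>: the pole at \<open>a\<^sub>m\<close> cancels since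
  \<open>\<langle>g(a\<^sub>m), f(a\<^sub>m)\<rangle> = 0\<close>.\<close>
definition row_pairing :: "real \<Rightarrow> int \<Rightarrow> 2 \<Rightarrow> complex \<Rightarrow> complex" where
  "row_pairing L m i z = complex_of_real (fvec' L i m) + pfsum (row_residue L m i) (- {m}) z"

lemma
  assumes L: "0 \<le> L" "L \<le> L0"
  shows infsum_kernel_xsol: "(\<Sum>\<^sub>\<infinity>k. kernel L m k * xsol L i k) = (\<Sum>\<^sub>\<infinity>k\<in>- {m}. xsol L i k * pairing L m k / of_int (m - k))"
    and summable_on_pairing_xsol: "(\<lambda>k. xsol L i k * pairing L m k / of_int (m - k)) summable_on - {m}"
proof -
  have L2: "L \<le> 1/2"
    using L L0_le_half by linarith
  have sum: "(\<lambda>k. kernel L m k * xsol L i k) summable_on - {m}"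
    by (rule summable_on_kernel_mult[OF L(1) L2]) (rule xsol_bounded[OF L])
  have "insert m (- {m}) = UNIV"
    by auto
  then have "(\<Sum>\<^sub>\<infinity>k. kernel L m k * xsol L i k) = (\<Sum>\<^sub>\<infinity>k\<in>insert m (- {m}). kernel L m k * xsol L i k)"
    by simp
  also have "\<dots> = (\<Sum>\<^sub>\<infinity>k\<in>- {m}. kernel L m k * xsol L i k)"
    using infsum_insert[OF sum, of m] by (simp add: kernel_def)
  also have "\<dots> = (\<Sum>\<^sub>\<infinity>k\<in>- {m}. xsol L i k * pairing L m k / of_int (m - k))"
    by (rule infsum_cong) (simp add: kernel_eq_pairing)
  finally show "(\<Sum>\<^sub>\<infinity>k. kernel L m k * xsol L i k) = (\<Sum>\<^sub>\<infinity>k\<in>- {m}. xsol L i k * pairing L m k / of_int (m - k))" .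
  show "(\<lambda>k. xsol L i k * pairing L m k / of_int (m - k)) summable_on - {m}"
    using sum by (rule summable_on_cong[THEN iffD1, rotated]) (simp add: kernel_eq_pairing)
qed

lemma residue_at_pole:
  assumes L: "0 \<le> L" "L \<le> L0"
  shows "residue L i j m = complex_of_real (coef L m * gvec' L j m) * row_pairing L m i (hpt m)"
proof -
  have "pfsum (row_residue L m i) (- {m}) (hpt m)
      = (\<Sum>\<^sub>\<infinity>k\<in>- {m}. complex_of_real (xsol L i k * pairing L m k / of_int (m - k)))"
    unfolding pfsum_def by (rule infsum_cong) (simp add: row_residue_def hpt_diff)
  also have "\<dots> = complex_of_real (\<Sum>\<^sub>\<infinity>k\<in>- {m}. xsol L i k * pairing L m k / of_int (m - k))"
    by (rule infsum_of_real[OF summable_on_pairing_xsol[OF L]])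
  finally have "pfsum (row_residue L m i) (- {m}) (hpt m)
      = complex_of_real (\<Sum>\<^sub>\<infinity>k\<in>- {m}. xsol L i k * pairing L m k / of_int (m - k))" .
  moreover have "xsol L i m = coef L m * (fvec' L i m + (\<Sum>\<^sub>\<infinity>k\<in>- {m}. xsol L i k * pairing L m k / of_int (m - k)))"
    using xsol_fixpoint[OF L, of i m] infsum_kernel_xsol[OF L] unfolding sys_map_def by simp
  ultimately show ?thesis
    unfolding residue_def row_pairing_def by (simp add: algebra_simps)
qed

lemma Ysol_times_fvec':
  assumes L: "0 \<le> L" "L \<le> L0" and z: "z \<in> ball (hpt m) (1/2)" "z \<noteq> hpt m"
  shows "(\<Sum>l\<in>UNIV. Ysol L z $ i $ l * complex_of_real (fvec' L l m)) = row_pairing L m i z"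
proof -
  have split: "pfsum (residue L i l) UNIV z = residue L i l m / (z - hpt m) + pfsum (residue L i l) (- {m}) z" for l
    by (rule pfsum_split[OF summable_on_norm_residue[OF L] z(1)])
  have "pfsum (row_residue L m i) (- {m}) z
      = complex_of_real (fvec' L 1 m) * pfsum (residue L i 1) (- {m}) z
        + complex_of_real (fvec' L 2 m) * pfsum (residue L i 2) (- {m}) z"
    unfolding row_residue_eq
    by (rule pfsum_linear[of "1/2"]) (use norm_diff_hpt_near z(1) summable_on_norm_residue[OF L] in auto)
  moreover have "complex_of_real (fvec' L 1 m) * residue L i 1 m + complex_of_real (fvec' L 2 m) * residue L i 2 m = 0"
    using pairing_diag[of L m] unfolding row_residue_eq[symmetric] row_residue_def by simp
  ultimately show ?thesis
    using exhaust_2[of i]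
    by (auto simp: sum_2 Ysol_entry split row_pairing_def algebra_simps add_divide_distrib[symmetric])
qed

lemma Ysol_jump_entry:
  assumes L: "0 \<le> L" "L \<le> L0" and z: "z \<in> ball (hpt m) (1/2)" "z \<noteq> hpt m"
  shows "(Ysol L z ** (mat 1 - (\<chi> i j. WY \<sigma> s L m $ i $ j / (z - hpt m)))) $ i $ j
     = (if i = j then 1 else 0) + pfsum (residue L i j) (- {m}) z
       - complex_of_real (coef L m * gvec' L j m) * ((row_pairing L m i z - row_pairing L m i (hpt m)) / (z - hpt m))"
proof -
  have "(Ysol L z ** (mat 1 - (\<chi> i j. WY \<sigma> s L m $ i $ j / (z - hpt m)))) $ i $ j
      = (\<Sum>l\<in>UNIV. Ysol L z $ i $ l * ((if l = j then 1 else 0)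
          - complex_of_real (coef L m * fvec' L l m * gvec' L j m) / (z - hpt m)))"
    by (simp add: matrix_matrix_mult_def mat_1_entry WY_entry)
  also have "\<dots> = (\<Sum>l\<in>UNIV. Ysol L z $ i $ l * (if l = j then 1 else 0))
      - complex_of_real (coef L m * gvec' L j m) / (z - hpt m)
        * (\<Sum>l\<in>UNIV. Ysol L z $ i $ l * complex_of_real (fvec' L l m))"
    by (simp add: right_diff_distrib sum_subtractf sum_distrib_left algebra_simps)
  also have "(\<Sum>l\<in>UNIV. Ysol L z $ i $ l * (if l = j then 1 else 0)) = Ysol L z $ i $ j"
    by (simp add: if_distrib cong: if_cong)
  also have "(\<Sum>l\<in>UNIV. Ysol L z $ i $ l * complex_of_real (fvec' L l m)) = row_pairing L m i z"
    by (rule Ysol_times_fvec'[OF L z])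
  also have "Ysol L z $ i $ j = (if i = j then 1 else 0) + residue L i j m / (z - hpt m) + pfsum (residue L i j) (- {m}) z"
    unfolding Ysol_entry pfsum_split[OF summable_on_norm_residue[OF L] z(1)] by simp
  also have "residue L i j m = complex_of_real (coef L m * gvec' L j m) * row_pairing L m i (hpt m)"
    by (rule residue_at_pole[OF L])
  moreover have "z - hpt m \<noteq> 0"
    using z(2) by simp
  ultimately show ?thesis
    by (simp add: field_simps)
qed

lemma Ysol_jump:
  assumes L: "0 \<le> L" "L \<le> L0"
  shows "\<exists>R. ((\<lambda>z. Ysol L z ** (mat 1 - (\<chi> i j. WY \<sigma> s L m $ i $ j / (z - hpt m)))) \<longlongrightarrow> R) (at (hpt m))"
proof -
  define M where "M z = Ysol L z ** (mat 1 - (\<chi> i j. WY \<sigma> s L m $ i $ j / (z - hpt m)))" for z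
  have "((\<lambda>z. M z $ i $ j) \<longlongrightarrow> Lim (at (hpt m)) (\<lambda>z. M z $ i $ j)) (at (hpt m))" for i j
  proof -
    have "pfsum (row_residue L m i) (- {m}) field_differentiable at (hpt m)"
      using holomorphic_on_pfsum_punctured[OF summable_on_norm_row_residue[OF L, of m i], of m]
      by (rule holomorphic_on_imp_differentiable_at) simp_all
    then obtain D where "(pfsum (row_residue L m i) (- {m}) has_field_derivative D) (at (hpt m))"
      by (auto simp: field_differentiable_def)
    then have "(row_pairing L m i has_field_derivative D) (at (hpt m))"
      unfolding row_pairing_def by (auto intro!: derivative_eq_intros)
    then have "((\<lambda>z. (row_pairing L m i z - row_pairing L m i (hpt m)) / (z - hpt m)) \<longlongrightarrow> D) (at (hpt m))"
      by (simp add: has_field_derivative_iff)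
    then have lim: "((\<lambda>z. (if i = j then 1 else 0) + pfsum (residue L i j) (- {m}) z
        - complex_of_real (coef L m * gvec' L j m) * ((row_pairing L m i z - row_pairing L m i (hpt m)) / (z - hpt m)))
        \<longlongrightarrow> (if i = j then 1 else 0) + pfsum (residue L i j) (- {m}) (hpt m) - complex_of_real (coef L m * gvec' L j m) * D)
        (at (hpt m))"
      using isCont_pfsum_punctured[OF summable_on_norm_residue[OF L, of i j], of m, unfolded isCont_def]
      by (intro tendsto_intros)
    have "\<forall>\<^sub>F z in at (hpt m). (if i = j then 1 else 0) + pfsum (residue L i j) (- {m}) z
        - complex_of_real (coef L m * gvec' L j m) * ((row_pairing L m i z - row_pairing L m i (hpt m)) / (z - hpt m))
        = M z $ i $ j"
      using eventually_at_ball'[of "1/2::real" "hpt m" UNIV, OF half_gt_zero[OF zero_less_one]]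
    proof (rule eventually_mono)
      fix z assume "z \<in> ball (hpt m) (1/2) \<and> z \<noteq> hpt m \<and> z \<in> UNIV"
      then show "(if i = j then 1 else 0) + pfsum (residue L i j) (- {m}) z
        - complex_of_real (coef L m * gvec' L j m) * ((row_pairing L m i z - row_pairing L m i (hpt m)) / (z - hpt m))
        = M z $ i $ j"
        unfolding M_def using Ysol_jump_entry[OF L, of z m i j] by simp
    qed
    note conv = lim[unfolded tendsto_cong[OF this]]
    show ?thesis
      using conv unfolding tendsto_Lim[OF trivial_limit_at conv] .
  qed
  then have "(M \<longlongrightarrow> (\<chi> i j. Lim (at (hpt m)) (\<lambda>z. M z $ i $ j))) (at (hpt m))"
    by (intro vec_tendstoI) simp
  then show ?thesis
    unfolding M_def by blast
qed

lemma RH_solution_Ysol: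
  assumes "0 \<le> L" "L \<le> L0"
  shows "RH_solution \<sigma> s L (Ysol L)"
  unfolding RH_solution_def hpt_def[symmetric] eventually_sequentially[symmetric]
  using holomorphic_on_Ysol[OF assms] Ysol_simple_pole[OF assms] Ysol_jump[OF assms]
    Ysol_normalized[OF assms] by blast

end

section \<open>Expansion in L\<close>

context RH_setup
begin

lemma poly_expansion_coef:
  assumes k: "-1 \<le> k"
  shows "poly_expansion 4 (\<lambda>L. coef L k)"
proof -
  have "\<forall>\<^sub>F L in at_right 0. 0 < L \<and> L < L0"
    unfolding eventually_at_right_field using L0_pos by (intro exI[of _ L0]) auto
  then have "\<forall>\<^sub>F L in at_right 0. gap \<le> \<bar>1 - Ms \<sigma> s L k\<bar>"
  proof (rule eventually_mono)
    fix L assume "0 < L \<and> L < L0"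
    then have "gap \<le> 1 - Ms \<sigma> s L k"
      by (intro gap_le_one_minus_Ms) auto
    then show "gap \<le> \<bar>1 - Ms \<sigma> s L k\<bar>"
      using abs_ge_self[of "1 - Ms \<sigma> s L k"] by linarith
  qed
  moreover have "poly_expansion 4 (\<lambda>L. 1 - Ms \<sigma> s L k)"
    unfolding Ms_eq by (intro poly_expansion_diff poly_expansion_const poly_expansion_cmult poly_expansion_KBe k)
  ultimately have "poly_expansion 4 (\<lambda>L. 1 / (1 - Ms \<sigma> s L k))"
    using gap_pos by (intro poly_expansion_inverse) auto
  from poly_expansion_cmult[OF this, of "tau k"] show ?thesis
    unfolding coef_def by simp
qed

definition kernel' :: "real \<Rightarrow> int \<Rightarrow> int \<Rightarrow> real" where
  "kernel' L m k = (if k = m then 0 else (J L (k + 1) * J L m - J L k * J L (m + 1)) / of_int (m - k))"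

lemma kernel_eq: "kernel L m k = L * kernel' L m k"
  unfolding kernel_def kernel'_def by simp

lemma poly_expansion_kernel': "poly_expansion 4 (\<lambda>L. kernel' L m k)"
proof (cases "k = m")
  case False
  have "poly_expansion 4 (\<lambda>L. 1 / of_int (m - k) * (J L (k + 1) * J L m - J L k * J L (m + 1)))"
    by (intro poly_expansion_cmult poly_expansion_diff poly_expansion_mult poly_expansion_J)
  then show ?thesis
    unfolding kernel'_def using False by simp
qed (simp add: kernel'_def poly_expansion_const)

lemma poly_expansion_L_mult_J: "poly_expansion 4 (\<lambda>L. L * J L n)"
  using poly_expansion_mult[OF poly_expansion_poly[of 4 "[:0, 1:]"] poly_expansion_J] by simp

lemma poly_expansion_fvec': "poly_expansion 4 (\<lambda>L. fvec' L i m)"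
  unfolding fvec'_def using poly_expansion_J poly_expansion_L_mult_J by (cases "i = 1") auto

lemma poly_expansion_gvec': "poly_expansion 4 (\<lambda>L. gvec' L j m)"
  unfolding gvec'_def
  using poly_expansion_cmult[OF poly_expansion_J, of "-1"] poly_expansion_L_mult_J by (cases "j = 1") auto

lemma abs_fvec'_le_power:
  assumes "0 \<le> L" "L \<le> 1"
  shows "\<bar>fvec' L i m\<bar> \<le> 6 * L ^ nat \<bar>m\<bar>" and "\<bar>gvec' L i m\<bar> \<le> 6 * L ^ nat \<bar>m\<bar>"
  using abs_J_le[OF assms, of m] L_abs_J_succ_le[OF assms, of m] assms
  unfolding fvec'_def gvec'_def by (auto simp: abs_mult)

definition decay_const :: real where
  "decay_const = (6 + 216 * half_pow_sum / gap) / gap"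

lemma decay_const_nonneg: "0 \<le> decay_const"
  unfolding decay_const_def using gap_pos half_pow_sum_pos by simp

lemma abs_xsol_le_power:
  assumes L: "0 \<le> L" "L \<le> L0"
  shows "\<bar>xsol L i m\<bar> \<le> decay_const * L ^ nat \<bar>m\<bar>"
proof -
  have L2: "L \<le> 1/2" and L1: "L \<le> 1"
    using L L0_le_half by linarith+
  have LJ: "L * (\<bar>J L m\<bar> + \<bar>J L (m + 1)\<bar>) \<le> 6 * L ^ nat \<bar>m\<bar>"
    using mult_right_mono[OF L1 abs_ge_zero[of "J L m"]] abs_J_le[OF L(1) L1, of m]
      L_abs_J_succ_le[OF L(1) L1, of m] by (simp add: distrib_left)
  have "\<bar>kernel L m k * xsol L i k\<bar> \<le> (6 * L * (\<bar>J L m\<bar> + \<bar>J L (m + 1)\<bar>) * (6 / gap)) * half_pow k" for k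
    using mult_mono[OF abs_kernel_le_J[OF L(1) L2] xsol_bounded[OF L]] half_pow_pos[of k] L
    by (simp add: abs_mult mult_ac)
  then have "\<bar>\<Sum>\<^sub>\<infinity>k. kernel L m k * xsol L i k\<bar> \<le> (6 * L * (\<bar>J L m\<bar> + \<bar>J L (m + 1)\<bar>) * (6 / gap)) * half_pow_sum"
    using L gap_pos by (intro abs_infsum_le_half_pow_dominated) auto
  also have "\<dots> \<le> (6 * (6 * L ^ nat \<bar>m\<bar>) * (6 / gap)) * half_pow_sum"
    using LJ gap_pos half_pow_sum_pos by (intro mult_right_mono) auto
  finally have sum: "\<bar>\<Sum>\<^sub>\<infinity>k. kernel L m k * xsol L i k\<bar> \<le> 216 * half_pow_sum / gap * L ^ nat \<bar>m\<bar>"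
    by (simp add: field_simps)
  have "\<bar>xsol L i m\<bar> = \<bar>coef L m * (fvec' L i m + (\<Sum>\<^sub>\<infinity>k. kernel L m k * xsol L i k))\<bar>"
    using xsol_fixpoint[OF L, of i m] unfolding sys_map_def by simp
  also have "\<dots> = coef L m * \<bar>fvec' L i m + (\<Sum>\<^sub>\<infinity>k. kernel L m k * xsol L i k)\<bar>"
    using coef_nonneg[OF L, of m] by (simp add: abs_mult)
  also have "\<dots> \<le> 1 / gap * (6 * L ^ nat \<bar>m\<bar> + 216 * half_pow_sum / gap * L ^ nat \<bar>m\<bar>)"
    using coef_nonneg[OF L, of m] coef_le[OF L, of m] abs_fvec'_le_power(1)[OF L(1) L1, of i m] sum gap_pos
    by (intro mult_mono order_trans[OF abs_triangle_ineq add_mono]) auto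
  also have "\<dots> = decay_const * L ^ nat \<bar>m\<bar>"
    unfolding decay_const_def by (simp add: field_simps)
  finally show ?thesis .
qed

text \<open>Residues at \<open>a\<^sub>k\<close> with \<open>\<bar>k\<bar> \<ge> 2\<close> are \<open>O(L\<^sup>4)\<close>, so the expansion involves only the poles
  at \<open>a\<^sub>k\<close>, \<open>k \<in> {-1, 0, 1}\<close>.\<close>
definition main_poles :: "int set" where
  "main_poles = {-1, 0, 1}"

lemma finite_main_poles: "finite main_poles"
  unfolding main_poles_def by simp

lemma abs_ge_2_if_not_main_pole: "k \<notin> main_poles \<Longrightarrow> 2 \<le> nat \<bar>k\<bar>"
  unfolding main_poles_def by auto

lemma power_abs_square_le:
  assumes "0 \<le> L" "L \<le> 1/2" "k \<notin> main_poles"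
  shows "L ^ nat \<bar>k\<bar> * L ^ nat \<bar>k\<bar> \<le> 16 * L ^ 4 * half_pow k"
  using power_double_abs_le_half_pow[OF assms(1,2) abs_ge_2_if_not_main_pole[OF assms(3)]]
  by (simp add: power_add[symmetric] mult_2)

lemma abs_infsum_kernel_xsol_tail_le:
  assumes L: "0 \<le> L" "L \<le> L0"
  shows "\<bar>\<Sum>\<^sub>\<infinity>j\<in>- main_poles. kernel L k j * xsol L i j\<bar> \<le> 288 * decay_const * L ^ 4 * half_pow_sum"
proof (rule abs_infsum_le_half_pow_dominated)
  have L2: "L \<le> 1/2"
    using L L0_le_half by linarith
  show "0 \<le> 288 * decay_const * L ^ 4"
    using decay_const_nonneg L by simp
  fix j assume j: "j \<in> - main_poles"
  have "\<bar>kernel L k j * xsol L i j\<bar> \<le> (18 * L ^ nat \<bar>j\<bar>) * (decay_const * L ^ nat \<bar>j\<bar>)"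
    unfolding abs_mult using abs_kernel_le_power[OF L(1) L2] abs_xsol_le_power[OF L] L
    by (intro mult_mono) auto
  also have "\<dots> = 18 * decay_const * (L ^ nat \<bar>j\<bar> * L ^ nat \<bar>j\<bar>)"
    by (simp add: mult_ac)
  also have "\<dots> \<le> 18 * decay_const * (16 * L ^ 4 * half_pow j)"
    using power_abs_square_le[OF L(1) L2] j decay_const_nonneg by (intro mult_left_mono) auto
  finally show "\<bar>kernel L k j * xsol L i j\<bar> \<le> 288 * decay_const * L ^ 4 * half_pow j"
    by (simp add: mult_ac)
qed

lemma xsol_split:
  assumes L: "0 \<le> L" "L \<le> L0"
  shows "xsol L i k = coef L k * fvec' L i k + coef L k * (L * (\<Sum>j\<in>main_poles. kernel' L k j * xsol L i j))
      + coef L k * (\<Sum>\<^sub>\<infinity>j\<in>- main_poles. kernel L k j * xsol L i j)"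
proof -
  have L2: "L \<le> 1/2"
    using L L0_le_half by linarith
  have sum: "(\<lambda>j. kernel L k j * xsol L i j) summable_on A" for A
    by (rule summable_on_kernel_mult[OF L(1) L2]) (rule xsol_bounded[OF L])
  have "(\<Sum>\<^sub>\<infinity>j. kernel L k j * xsol L i j)
      = (\<Sum>\<^sub>\<infinity>j\<in>main_poles. kernel L k j * xsol L i j) + (\<Sum>\<^sub>\<infinity>j\<in>- main_poles. kernel L k j * xsol L i j)"
    using infsum_Un_disjoint[OF sum sum, of main_poles "- main_poles"] by simp
  also have "(\<Sum>\<^sub>\<infinity>j\<in>main_poles. kernel L k j * xsol L i j) = L * (\<Sum>j\<in>main_poles. kernel' L k j * xsol L i j)"
    using finite_main_poles by (simp add: kernel_eq sum_distrib_left mult_ac)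
  finally show ?thesis
    using xsol_fixpoint[OF L, of i k] unfolding sys_map_def by (simp add: algebra_simps)
qed

text \<open>Bootstrapping: an expansion of the finitely many main components to order \<open>n\<close> gives one
  to order \<open>n + 1\<close>, because they enter their own equations with a factor \<open>L\<close>.\<close>
lemma poly_expansion_xsol:
  assumes "k \<in> main_poles"
  shows "poly_expansion 4 (\<lambda>L. xsol L i k)"
proof -
  have eventually_L: "\<forall>\<^sub>F L in at_right 0. 0 < L \<and> L < L0"
    unfolding eventually_at_right_field using L0_pos by (intro exI[of _ L0]) auto
  have "poly_expansion n (\<lambda>L. xsol L i k)" if "n \<le> 4" "k \<in> main_poles" for n k
    using that
  proof (induction n arbitrary: k)
    case 0
    have "(\<lambda>L. xsol L i k) \<in> O[at_right 0](\<lambda>L. L ^ 0)"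
      using eventually_L by (intro bigo_power_at_right_0I[of _ "6 / gap"]) (auto elim!: eventually_mono intro: xsol_bounded)
    then show ?case
      by (rule poly_expansion_bigo)
  next
    case (Suc n)
    have k: "-1 \<le> k"
      using Suc.prems(2) unfolding main_poles_def by auto
    have IH: "poly_expansion n (\<lambda>L. xsol L i j)" if "j \<in> main_poles" for j
      using Suc that by simp
    have main: "poly_expansion (Suc n) (\<lambda>L. coef L k * fvec' L i k + coef L k * (L * (\<Sum>j\<in>main_poles. kernel' L k j * xsol L i j)))"
      using Suc.prems(1)
      by (intro poly_expansion_add poly_expansion_mult poly_expansion_mult_L poly_expansion_sum
          poly_expansion_mono[OF poly_expansion_coef[OF k]] poly_expansion_mono[OF poly_expansion_fvec']
          poly_expansion_mono[OF poly_expansion_kernel'] IH) auto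
    have "\<forall>\<^sub>F L in at_right 0. \<bar>coef L k * (\<Sum>\<^sub>\<infinity>j\<in>- main_poles. kernel L k j * xsol L i j)\<bar>
        \<le> 288 * decay_const * half_pow_sum / gap * L ^ 4"
      using eventually_L
    proof (rule eventually_mono)
      fix L :: real assume "0 < L \<and> L < L0"
      then have L: "0 \<le> L" "L \<le> L0"
        by auto
      have "\<bar>coef L k\<bar> * \<bar>\<Sum>\<^sub>\<infinity>j\<in>- main_poles. kernel L k j * xsol L i j\<bar> \<le> 1 / gap * (288 * decay_const * L ^ 4 * half_pow_sum)"
        using coef_nonneg[OF L, of k] coef_le[OF L, of k] abs_infsum_kernel_xsol_tail_le[OF L, of k i] gap_pos
        by (intro mult_mono) auto
      then show "\<bar>coef L k * (\<Sum>\<^sub>\<infinity>j\<in>- main_poles. kernel L k j * xsol L i j)\<bar> \<le> 288 * decay_const * half_pow_sum / gap * L ^ 4"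
        by (simp add: abs_mult field_simps)
    qed
    then have "(\<lambda>L. coef L k * (\<Sum>\<^sub>\<infinity>j\<in>- main_poles. kernel L k j * xsol L i j)) \<in> O[at_right 0](\<lambda>L. L ^ 4)"
      by (rule bigo_power_at_right_0I)
    then have tail: "poly_expansion (Suc n) (\<lambda>L. coef L k * (\<Sum>\<^sub>\<infinity>j\<in>- main_poles. kernel L k j * xsol L i j))"
      using Suc.prems(1) by (intro poly_expansion_mono[OF poly_expansion_bigo]) auto
    have "\<forall>\<^sub>F L in at_right 0. coef L k * fvec' L i k + coef L k * (L * (\<Sum>j\<in>main_poles. kernel' L k j * xsol L i j))
        + coef L k * (\<Sum>\<^sub>\<infinity>j\<in>- main_poles. kernel L k j * xsol L i j) = xsol L i k"
      using eventually_L by (rule eventually_mono) (auto intro: xsol_split[symmetric])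
    with poly_expansion_add[OF main tail] show ?case
      by (rule poly_expansion_cong)
  qed
  then show ?thesis
    using assms by simp
qed

lemma tail_residues_le:
  assumes L: "0 \<le> L" "L \<le> L0"
  shows "(\<Sum>\<^sub>\<infinity>k\<in>- main_poles. norm (residue L i j k)) \<le> 96 * decay_const * L ^ 4 * half_pow_sum"
proof -
  have L2: "L \<le> 1/2" and L1: "L \<le> 1"
    using L L0_le_half by linarith+
  have "\<bar>\<Sum>\<^sub>\<infinity>k\<in>- main_poles. norm (residue L i j k)\<bar> \<le> 96 * decay_const * L ^ 4 * half_pow_sum"
  proof (rule abs_infsum_le_half_pow_dominated)
    show "0 \<le> 96 * decay_const * L ^ 4"
      using decay_const_nonneg L by simp
    fix k assume k: "k \<in> - main_poles"
    have "norm (residue L i j k) \<le> (decay_const * L ^ nat \<bar>k\<bar>) * (6 * L ^ nat \<bar>k\<bar>)"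
      unfolding residue_def norm_of_real abs_mult
      using abs_xsol_le_power[OF L] abs_fvec'_le_power(2)[OF L(1) L1] L decay_const_nonneg
      by (intro mult_mono) auto
    also have "\<dots> = 6 * decay_const * (L ^ nat \<bar>k\<bar> * L ^ nat \<bar>k\<bar>)"
      by (simp add: mult_ac)
    also have "\<dots> \<le> 6 * decay_const * (16 * L ^ 4 * half_pow k)"
      using power_abs_square_le[OF L(1) L2] k decay_const_nonneg by (intro mult_left_mono) auto
    finally show "\<bar>norm (residue L i j k)\<bar> \<le> 96 * decay_const * L ^ 4 * half_pow k"
      by (simp add: mult_ac)
  qed
  then show ?thesis
    by simp
qed

end

context RH_setup
begin

definition expansion_poly :: "2 \<Rightarrow> 2 \<Rightarrow> int \<Rightarrow> real poly" where
  "expansion_poly i j k = (SOME p. (\<lambda>L. xsol L i k * gvec' L j k - poly p L) \<in> O[at_right 0](\<lambda>L. L ^ 4))"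

lemma expansion_poly:
  assumes "k \<in> main_poles"
  shows "(\<lambda>L. xsol L i k * gvec' L j k - poly (expansion_poly i j k) L) \<in> O[at_right 0](\<lambda>L. L ^ 4)"
  using poly_expansion_mult[OF poly_expansion_xsol[OF assms] poly_expansion_gvec']
  unfolding poly_expansion_def expansion_poly_def by (rule someI_ex)

definition Ycoeff :: "nat \<Rightarrow> complex \<Rightarrow> complex ^ 2 ^ 2" where
  "Ycoeff d z = (\<chi> i j. (if d = 0 \<and> i = j then 1 else 0)
     + (\<Sum>k\<in>main_poles. complex_of_real (coeff (expansion_poly i j k) d) / (z - hpt k)))"

lemma Ycoeff_entry:
  "Ycoeff d z $ i $ j = (if d = 0 \<and> i = j then 1 else 0)
     + (\<Sum>k\<in>main_poles. complex_of_real (coeff (expansion_poly i j k) d) / (z - hpt k))"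
  unfolding Ycoeff_def by simp

lemma meromorphic_on_Ycoeff: "(\<lambda>z. Ycoeff d z $ i $ j) meromorphic_on UNIV"
  unfolding Ycoeff_entry by (intro meromorphic_intros)

lemma holomorphic_on_Ycoeff: "(\<lambda>z. Ycoeff d z $ i $ j) holomorphic_on (- halfintC)"
  unfolding Ycoeff_entry by (intro holomorphic_intros) (auto simp: halfintC_iff)

lemma Ysol_minus_expansion_entry:
  "(Ysol L z - (Ycoeff 0 z + L *\<^sub>R Ycoeff 1 z + L\<^sup>2 *\<^sub>R Ycoeff 2 z + L ^ 3 *\<^sub>R Ycoeff 3 z)) $ i $ j
     = pfsum (residue L i j) UNIV z
       - (\<Sum>k\<in>main_poles. complex_of_real (\<Sum>d<4. coeff (expansion_poly i j k) d * L ^ d) / (z - hpt k))"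
proof -
  define S where "S d = (\<Sum>k\<in>main_poles. complex_of_real (coeff (expansion_poly i j k) d) / (z - hpt k))" for d
  have expand: "complex_of_real (\<Sum>d<4. c d * L ^ d) / w
      = of_real (c 0) / w + of_real L * (of_real (c 1) / w) + of_real (L\<^sup>2) * (of_real (c 2) / w)
        + of_real (L ^ 3) * (of_real (c 3) / w)" for c :: "nat \<Rightarrow> real" and w :: complex
    by (simp add: eval_nat_numeral lessThan_Suc add_divide_distrib mult_ac)
  have "(\<Sum>k\<in>main_poles. complex_of_real (\<Sum>d<4. coeff (expansion_poly i j k) d * L ^ d) / (z - hpt k))
      = S 0 + of_real L * S 1 + of_real (L\<^sup>2) * S 2 + of_real (L ^ 3) * S 3"
    unfolding S_def expand by (simp only: sum.distrib sum_distrib_left)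
  moreover have "Ycoeff d z $ i $ j = (if d = 0 \<and> i = j then 1 else 0) + S d" for d
    unfolding S_def by (rule Ycoeff_entry)
  ultimately show ?thesis
    unfolding vector_minus_component vector_add_component vector_scaleR_component
    by (simp add: Ysol_entry scaleR_conv_of_real)
qed

lemma Ysol_expansion:
  assumes z: "z \<notin> halfintC"
  shows "(\<lambda>L. norm (Ysol L z - (Ycoeff 0 z + L *\<^sub>R Ycoeff 1 z + L\<^sup>2 *\<^sub>R Ycoeff 2 z + L ^ 3 *\<^sub>R Ycoeff 3 z)))
    \<in> O[at_right 0](\<lambda>L. L ^ 4)"
proof -
  obtain e where e: "0 < e" "\<And>k. e \<le> cmod (z - hpt k)"
    using halfintC_separated_point[OF z] by blast
  define E where "E L = Ysol L z - (Ycoeff 0 z + L *\<^sub>R Ycoeff 1 z + L\<^sup>2 *\<^sub>R Ycoeff 2 z + L ^ 3 *\<^sub>R Ycoeff 3 z)" for L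
  define T where "T i j k L = (\<Sum>d<4. coeff (expansion_poly i j k) d * L ^ d)" for i j k L
  define bound where "bound i j L = (\<Sum>k\<in>main_poles. \<bar>xsol L i k * gvec' L j k - T i j k L\<bar>) / e
    + 96 * decay_const * half_pow_sum / e * L ^ 4" for i j L
  have E_le: "cmod (E L $ i $ j) \<le> bound i j L" if L: "0 \<le> L" "L \<le> L0" for L i j
  proof -
    have "pfsum (residue L i j) UNIV z - (\<Sum>k\<in>main_poles. residue L i j k / (z - hpt k))
        = pfsum (residue L i j) (UNIV - main_poles) z"
      using e finite_main_poles by (intro pfsum_diff_finite[OF summable_on_norm_residue[OF L]]) auto
    then have split: "pfsum (residue L i j) UNIV z
        = (\<Sum>k\<in>main_poles. residue L i j k / (z - hpt k)) + pfsum (residue L i j) (UNIV - main_poles) z"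
      by (metis diff_eq_eq add.commute)
    have eq: "E L $ i $ j = (\<Sum>k\<in>main_poles. (residue L i j k - complex_of_real (T i j k L)) / (z - hpt k))
        + pfsum (residue L i j) (UNIV - main_poles) z"
      unfolding E_def Ysol_minus_expansion_entry T_def split by (simp add: sum_subtractf diff_divide_distrib)
    have head: "cmod (\<Sum>k\<in>main_poles. (residue L i j k - complex_of_real (T i j k L)) / (z - hpt k))
        \<le> (\<Sum>k\<in>main_poles. norm (residue L i j k - complex_of_real (T i j k L))) / e"
      by (rule norm_sum_partial_fractions_le[OF e])
    have "cmod (pfsum (residue L i j) (UNIV - main_poles) z) \<le> (\<Sum>\<^sub>\<infinity>k\<in>UNIV - main_poles. norm (residue L i j k)) / e"
      by (rule norm_pfsum_le[OF summable_on_norm_residue[OF L] e])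
    also have "\<dots> \<le> 96 * decay_const * half_pow_sum / e * L ^ 4"
      using tail_residues_le[OF L, of i j] e(1) by (simp add: Compl_eq_Diff_UNIV divide_right_mono mult_ac)
    finally have tail: "cmod (pfsum (residue L i j) (UNIV - main_poles) z) \<le> 96 * decay_const * half_pow_sum / e * L ^ 4" .
    have "cmod (E L $ i $ j) \<le> (\<Sum>k\<in>main_poles. norm (residue L i j k - complex_of_real (T i j k L))) / e
        + 96 * decay_const * half_pow_sum / e * L ^ 4"
      unfolding eq by (rule order_trans[OF norm_triangle_ineq add_mono[OF head tail]])
    moreover have "norm (residue L i j k - complex_of_real (T i j k L)) = \<bar>xsol L i k * gvec' L j k - T i j k L\<bar>" for k
      unfolding residue_def by (simp only: of_real_diff[symmetric] norm_of_real)
    ultimately show ?thesis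
      unfolding bound_def by simp
  qed
  have terms: "(\<lambda>L. xsol L i k * gvec' L j k - T i j k L) \<in> O[at_right 0](\<lambda>L. L ^ 4)" if "k \<in> main_poles" for i j k
    using sum_in_bigo(1)[OF expansion_poly[OF that, of i j] poly_truncation_bigo[of "expansion_poly i j k" 4]]
    unfolding T_def by simp
  have bound_bigo: "bound i j \<in> O[at_right 0](\<lambda>L. L ^ 4)" for i j
  proof -
    have "(\<lambda>L. \<Sum>k\<in>main_poles. \<bar>xsol L i k * gvec' L j k - T i j k L\<bar>) \<in> O[at_right 0](\<lambda>L. L ^ 4)"
      using terms by (intro big_sum_in_bigo) simp
    then show ?thesis
      unfolding bound_def using e(1) by (intro sum_in_bigo) simp_all
  qed
  have "\<forall>\<^sub>F L in at_right 0. 0 < L \<and> L < L0"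
    unfolding eventually_at_right_field using L0_pos by (intro exI[of _ L0]) auto
  then have "\<forall>\<^sub>F L in at_right 0. norm (norm (E L)) \<le> 1 * norm (\<Sum>i\<in>UNIV. \<Sum>j\<in>UNIV. bound i j L)"
  proof (rule eventually_mono)
    fix L assume "0 < L \<and> L < L0"
    then have "norm (E L) \<le> (\<Sum>i\<in>UNIV. \<Sum>j\<in>UNIV. bound i j L)"
      using E_le[of L] by (intro order_trans[OF norm_le_sum_entries] sum_mono) auto
    then show "norm (norm (E L)) \<le> 1 * norm (\<Sum>i\<in>UNIV. \<Sum>j\<in>UNIV. bound i j L)"
      by simp
  qed
  then have "(\<lambda>L. norm (E L)) \<in> O[at_right 0](\<lambda>L. \<Sum>i\<in>UNIV. \<Sum>j\<in>UNIV. bound i j L)"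
    by (rule bigoI)
  moreover have "(\<lambda>L. \<Sum>i\<in>UNIV. \<Sum>j\<in>UNIV. bound i j L) \<in> O[at_right 0](\<lambda>L. L ^ 4)"
    using bound_bigo by (intro big_sum_in_bigo)
  ultimately show ?thesis
    unfolding E_def by (rule landau_o.big_trans)
qed

end

lemma finite_summable_on_gt:
  fixes f :: "'a \<Rightarrow> real"
  assumes sum: "f summable_on A" and nonneg: "\<And>x. x \<in> A \<Longrightarrow> 0 \<le> f x" and c: "0 < c"
  shows "finite {x\<in>A. c < f x}"
proof (rule ccontr)
  assume "infinite {x\<in>A. c < f x}"
  obtain n :: nat where n: "infsum f A < real n * c"
    using reals_Archimedean2[of "infsum f A / c"] c by (auto simp: field_simps)
  obtain F where F: "finite F" "card F = n" "F \<subseteq> {x\<in>A. c < f x}"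
    using infinite_arbitrarily_large[OF \<open>infinite {x\<in>A. c < f x}\<close>] by blast
  have "real (card F) * c \<le> sum f F"
    by (rule sum_bounded_below) (use F in auto)
  also have "\<dots> \<le> infsum f A"
    by (rule finite_sum_le_infsum[OF sum F(1)]) (use F nonneg in auto)
  finally show False
    using n F(2) by simp
qed

lemma factor_nonzero_if_prod_tendsto_nonzero:
  fixes g :: "nat \<Rightarrow> real"
  assumes "(\<lambda>N. \<Prod>i\<in>{1..N}. g i) \<longlonglongrightarrow> Q" "Q \<noteq> 0" "1 \<le> i"
  shows "g i \<noteq> 0"
proof
  assume "g i = 0"
  then have "\<forall>\<^sub>F N in sequentially. (\<Prod>i\<in>{1..N}. g i) = 0"
    unfolding eventually_sequentially using assms(3) by (intro exI[of _ i] allI impI prod_zero) auto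
  then have "(\<lambda>N. \<Prod>i\<in>{1..N}. g i) \<longlonglongrightarrow> 0"
    by (rule tendsto_eventually)
  then show False
    using assms(1,2) LIMSEQ_unique by blast
qed

text \<open>The hypotheses bound \<open>\<sigma>(a - s - 1/2)\<close> away from \<open>1\<close> for \<open>a < 0\<close>: no factor of the product
  \<open>Q\<^sup>0\<^sub>\<sigma>(s)\<close> vanishes, and by summability only finitely many of these values exceed \<open>1/2\<close>.\<close>
lemma RH_setup_exists:
  assumes range: "\<forall>l\<in>halfint. 0 \<le> \<sigma> l \<and> \<sigma> l \<le> 1"
    and sum: "\<sigma> summable_on {l \<in> halfint. l < 0}"
    and s: "s \<in> halfint"
    and Q: "(\<lambda>N. \<Prod>i\<in>{1..N}. 1 - \<sigma> (- real i - s)) \<longlonglongrightarrow> Q" "Q > 0"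
  obtains \<theta> where "RH_setup \<sigma> s \<theta>"
proof -
  define arg where "arg m = of_int m + 1/2 - s - 1/2" for m :: int
  obtain n0 :: int where n0: "s = of_int n0 + 1/2"
    using s unfolding halfint_def by blast
  have arg_halfint: "arg m \<in> halfint" for m
    unfolding halfint_def arg_def n0 by (rule CollectI exI[of _ "m - n0 - 1"])+ simp
  have range': "0 \<le> \<sigma> (arg m) \<and> \<sigma> (arg m) \<le> 1" for m
    using range arg_halfint by blast
  have less_1: "\<sigma> (arg m) < 1" if "m < 0" for m
  proof -
    have "1 - \<sigma> (- real (nat (- m)) - s) \<noteq> 0"
      using that by (intro factor_nonzero_if_prod_tendsto_nonzero[OF Q(1)]) (use Q(2) in auto)
    moreover have "- real (nat (- m)) - s = arg m"
      using that unfolding arg_def by simp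
    ultimately show ?thesis
      using range'[of m] by simp
  qed
  define E where "E = {m. m < 0 \<and> 1/2 < \<sigma> (arg m)}"
  have "finite {l \<in> {l \<in> halfint. l < 0}. 1/2 < \<sigma> l}"
    by (rule finite_summable_on_gt[OF sum]) (use range in auto)
  then have "finite (arg -` {l \<in> {l \<in> halfint. l < 0}. 1/2 < \<sigma> l} \<union> {\<lceil>s\<rceil>..0})"
    by (intro finite_UnI finite_vimageI) (auto simp: inj_on_def arg_def)
  moreover have "E \<subseteq> arg -` {l \<in> {l \<in> halfint. l < 0}. 1/2 < \<sigma> l} \<union> {\<lceil>s\<rceil>..0}"
    using arg_halfint by (auto simp: E_def arg_def ceiling_le_iff)
  ultimately have "finite E"
    by (rule finite_subset[rotated])
  define \<theta> where "\<theta> = Max (insert (1/2) ((\<lambda>m. \<sigma> (arg m)) ` E))"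
  have fin: "finite (insert (1/2) ((\<lambda>m. \<sigma> (arg m)) ` E))"
    using \<open>finite E\<close> by simp
  have "\<theta> < 1"
    unfolding \<theta>_def using fin by (subst Max_less_iff) (auto simp: E_def less_1)
  moreover have neg: "\<sigma> (arg m) \<le> \<theta>" if "m < 0" for m
  proof (cases "m \<in> E")
    case True
    then show ?thesis
      unfolding \<theta>_def by (intro Max_ge[OF fin]) simp
  next
    case False
    moreover have "1/2 \<le> \<theta>"
      unfolding \<theta>_def by (rule Max_ge[OF fin]) simp
    ultimately show ?thesis
      using that unfolding E_def by auto
  qed
  moreover have "0 \<le> \<theta>"
    using neg[of "-1"] range'[of "-1"] by simp
  ultimately have "RH_setup \<sigma> s \<theta>"
    by unfold_locales (use range' in \<open>auto simp: arg_def\<close>)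
  then show ?thesis
    by (rule that)
qed

theorem corollary5p2:
  fixes \<sigma> :: "real \<Rightarrow> real" and s Q :: real
  assumes sigma_range: "\<forall>l\<in>halfint. 0 \<le> \<sigma> l \<and> \<sigma> l \<le> 1"
    and sigma_sum: "\<sigma> summable_on {l \<in> halfint. l < 0}"
    and s_half: "s \<in> halfint"
    and Q_lim: "(\<lambda>N. \<Prod>i\<in>{1..N}. 1 - \<sigma> (- real i - s)) \<longlonglongrightarrow> Q"
    and Q_pos: "Q > 0"
  shows "\<exists>Lstar>0. \<exists>(Y :: real \<Rightarrow> complex \<Rightarrow> complex^2^2) Y0 Y1 Y2 Y3.
           (\<forall>L\<in>{0..Lstar}. RH_solution \<sigma> s L (Y L)) \<and>
           (\<forall>Yi\<in>{Y0, Y1, Y2, Y3}. \<forall>i j. (\<lambda>z. Yi z $ i $ j) meromorphic_on UNIV \<and>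
                                         (\<lambda>z. Yi z $ i $ j) holomorphic_on (- halfintC)) \<and>
           (\<forall>z. z \<notin> halfintC \<longrightarrow>
              (\<exists>C \<delta>. \<delta> > 0 \<and> (\<forall>L. 0 < L \<and> L < \<delta> \<longrightarrow>
                 norm (Y L z - (Y0 z + L *\<^sub>R Y1 z + L^2 *\<^sub>R Y2 z + L^3 *\<^sub>R Y3 z)) \<le> C * L^4)))"
proof -
  obtain \<theta> where "RH_setup \<sigma> s \<theta>"
    using RH_setup_exists[OF sigma_range sigma_sum s_half Q_lim Q_pos] .
  then interpret RH_setup \<sigma> s \<theta> .
  have "\<exists>C \<delta>. \<delta> > 0 \<and> (\<forall>L. 0 < L \<and> L < \<delta> \<longrightarrow>
      norm (Ysol L z - (Ycoeff 0 z + L *\<^sub>R Ycoeff 1 z + L^2 *\<^sub>R Ycoeff 2 z + L^3 *\<^sub>R Ycoeff 3 z)) \<le> C * L^4)"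
    if z: "z \<notin> halfintC" for z
  proof -
    obtain \<delta> C where "0 < \<delta>" "\<And>L. 0 < L \<Longrightarrow> L < \<delta> \<Longrightarrow>
        \<bar>norm (Ysol L z - (Ycoeff 0 z + L *\<^sub>R Ycoeff 1 z + L^2 *\<^sub>R Ycoeff 2 z + L^3 *\<^sub>R Ycoeff 3 z))\<bar> \<le> C * L^4"
      using bigo_power_at_right_0E[OF Ysol_expansion[OF z]] by blast
    then show ?thesis
      by (intro exI[of _ C] exI[of _ \<delta>]) simp
  qed
  moreover have "\<forall>L\<in>{0..L0}. RH_solution \<sigma> s L (Ysol L)"
    using RH_solution_Ysol by auto
  moreover have "\<forall>Yi\<in>{Ycoeff 0, Ycoeff 1, Ycoeff 2, Ycoeff 3}. \<forall>i j.
      (\<lambda>z. Yi z $ i $ j) meromorphic_on UNIV \<and> (\<lambda>z. Yi z $ i $ j) holomorphic_on (- halfintC)"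
    using meromorphic_on_Ycoeff holomorphic_on_Ycoeff by auto
  ultimately show ?thesis
    using L0_pos by blast
qed

end
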